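(* Let $\eta$ be a weight of class $*$, let $K\subseteq\mathbb R^n$ be compact, let $\chi\in\mathcal S^*_\dagger(\mathbb R^n)$ and let $\Psi=\{\psi_\lambda\}_{\lambda\in\Lambda}$ be a UCPU of class $*-\dagger$ with points $\{y_\lambda\}_{\lambda\in\Lambda}$. In the Beurling case, for every $\tilde h>0$ there is $\tilde C\ge1$ such that $$\sup_{x\in y_\mu+K}\|\psi_\lambda T_x\chi\|_{\mathcal FL^1_\eta}\le\tilde Ce^{-A(\tilde h|y_\lambda-y_\mu|)}\quad\text{for all }\lambda,\mu\in\Lambda.$$ In the Roumieu case, there are $\tilde h>0$ and $\tilde C\ge1$ such that the same inequality holds.
   Context: $\{M_p\}_{p\in\mathbb N}$, $\{A_p\}_{p\in\mathbb N}$ are sequences of positive numbers with $M_0=M_1=A_0=A_1=1$, both satisfying (M.1) $M_p^2\le M_{p-1}M_{p+1}$ ($p\ge1$), (M.2) $M_{p+q}\le c_0H^{p+q}M_pM_q$ for some $c_0,H\ge1$, (M.6) $p!\le c_0L_0^pM_p$ for some $c_0,L_0\ge1$; $\{A_p\}$ moreover satisfies (M.2)$^*$: $2m_p\le m_{pN}$ for $p\ge p_0$, some $p_0,N\in\mathbb Z_+$, $m_j=A_j/A_{j-1}$. $M_\alpha=M_{|\alpha|}$; associated functions $M(\rho)=\sup_p\ln(\rho^p/M_p)$, $A(\rho)=\sup_p\ln(\rho^p/A_p)$. $\mathcal S^{M_p,h}_{A_p,h}(\mathbb R^n)$ ($h>0$) is the Banach space of smooth $\varphi$ with $\sup_\alpha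 h^{|\alpha|}\|e^{A(h|\cdot|)}\partial^\alpha\varphi\|_{L^\infty}/M_\alpha<\infty$; $\mathcal S^*_\dagger(\mathbb R^n)$ denotes the Beurling space (projective limit as $h\to\infty$) or the Roumieu space (inductive limit as $h\to0^+$). A measurable $\eta:\mathbb R^n\to(0,\infty)$ is a weight of class $*$ if there are $C,\tau>0$ (Beurling; Roumieu: for every $\tau>0$ some $C>0$) with $\eta(x+y)\le C\eta(x)e^{M(\tau|y|)}$. $\mathcal Ff(\xi)=\int e^{-2\pi ix\cdot\xi}f(x)dx$, and $\mathcal FL^1_\eta=\{\mathcal Ff: \eta f\in L^1\}$ with $\|\mathcal Ff\|_{\mathcal FL^1_\eta}=\|\eta f\|_{L^1}$. $T_x\chi=\chi(\cdot-x)$. A uniformly concentrated partition of unity (UCPU) of class $*-\dagger$ is a family $\{\psi_\lambda\}_{\lambda\in\Lambda}\subseteq\mathcal S^*_\dagger(\mathbb R^n)$, $\Lambda$ countable, together with points $\{y_\lambda\}_{\lambda\in\Lambda}\subseteq\mathbb R^n$ such that: (1) for every $h>0$ (Beurling; Roumieu: for some $h>0$) $\sup_{\lambda}\sup_\alpha\sup_x h^{|\alpha|}|\partial^\alpha\psi_\lambda(x)|e^{A(h|x-y_\lambda|)}/M_\alpha<\infty$; (2) for every compact $K$ there is $C_K$ with $\sup_x|\{\lambda: x\in y_\lambda+K\}|\le C_K$; (3) there is a bounded open neighbourhood $U$ of $0$ with $\mathbb R^n=\bigcup_\lambda(y_\lambda+U)$; (4) $\sum_\lambda\psi_\lambda(x)=1$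 for all $x$. *)

theory Defs
  imports "HOL-Analysis.Analysis"
begin

definition seq_M1 :: "(nat \<Rightarrow> real) \<Rightarrow> bool" where
  "seq_M1 M \<longleftrightarrow> (\<forall>p\<ge>1. (M p)\<^sup>2 \<le> M (p - 1) * M (p + 1))"

definition seq_M2 :: "(nat \<Rightarrow> real) \<Rightarrow> bool" where
  "seq_M2 M \<longleftrightarrow> (\<exists>c0 H. c0 \<ge> 1 \<and> H \<ge> 1 \<and>
      (\<forall>p q. M (p + q) \<le> c0 * H ^ (p + q) * M p * M q))"

definition seq_M6 :: "(nat \<Rightarrow> real) \<Rightarrow> bool" where
  "seq_M6 M \<longleftrightarrow> (\<exists>c0 L0. c0 \<ge> 1 \<and> L0 \<ge> 1 \<and>
      (\<forall>p. fact p \<le> c0 * L0 ^ p * M p))"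

definition seq_M2star :: "(nat \<Rightarrow> real) \<Rightarrow> bool" where
  "seq_M2star A \<longleftrightarrow> (\<exists>p0 N::nat. p0 > 0 \<and> N > 0 \<and>
      (\<forall>p\<ge>p0. 2 * (A p / A (p - 1)) \<le> A (p * N) / A (p * N - 1)))"

definition weight_seq :: "(nat \<Rightarrow> real) \<Rightarrow> bool" where
  "weight_seq M \<longleftrightarrow> (\<forall>p. M p > 0) \<and> M 0 = 1 \<and> M 1 = 1 \<and>
      seq_M1 M \<and> seq_M2 M \<and> seq_M6 M"

definition assoc_fn :: "(nat \<Rightarrow> real) \<Rightarrow> real \<Rightarrow> real" where
  "assoc_fn M \<rho> = (if \<rho> \<le> 0 then 0 else (SUP p. ln (\<rho> ^ p / M p)))"

definition partial :: "'n::finite \<Rightarrow> (real^'n \<Rightarrow> complex) \<Rightarrow> real^'n \<Rightarrow> complex" where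
  "partial i f x = vector_derivative (\<lambda>t. f (x + t *\<^sub>R axis i 1)) (at 0)"

fun dlist :: "'n::finite list \<Rightarrow> (real^'n \<Rightarrow> complex) \<Rightarrow> real^'n \<Rightarrow> complex" where
  "dlist [] f = f"
| "dlist (i # is) f = partial i (dlist is f)"

definition enum_list :: "'n::finite list" where
  "enum_list = (SOME xs. distinct xs \<and> set xs = UNIV)"

definition mderiv :: "('n::finite \<Rightarrow> nat) \<Rightarrow> (real^'n \<Rightarrow> complex) \<Rightarrow> real^'n \<Rightarrow> complex" where
  "mderiv \<alpha> f = dlist (concat (map (\<lambda>i. replicate (\<alpha> i) i) enum_list)) f"

definition mlen :: "('n::finite \<Rightarrow> nat) \<Rightarrow> nat" where
  "mlen \<alpha> = (\<Sum>i\<in>UNIV. \<alpha> i)"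

definition smooth_fn :: "(real^'n::finite \<Rightarrow> complex) \<Rightarrow> bool" where
  "smooth_fn f \<longleftrightarrow> (\<forall>ds. continuous_on UNIV (dlist ds f) \<and>
      (\<forall>i x. (\<lambda>t. dlist ds f (x + t *\<^sub>R axis i 1)) differentiable (at 0)))"

definition in_S_h :: "(nat \<Rightarrow> real) \<Rightarrow> (nat \<Rightarrow> real) \<Rightarrow> real \<Rightarrow> (real^'n::finite \<Rightarrow> complex) \<Rightarrow> bool" where
  "in_S_h M A h \<phi> \<longleftrightarrow> smooth_fn \<phi> \<and>
     (\<exists>B. \<forall>\<alpha> x. h ^ mlen \<alpha> * norm (mderiv \<alpha> \<phi> x) * exp (assoc_fn A (h * norm x)) / M (mlen \<alpha>) \<le> B)"

definition in_S :: "bool \<Rightarrow> (nat \<Rightarrow> real) \<Rightarrow> (nat \<Rightarrow> real) \<Rightarrow> (real^'n::finite \<Rightarrow> complex) \<Rightarrow> bool" where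
  "in_S beurling M A \<phi> \<longleftrightarrow>
     (if beurling then (\<forall>h>0. in_S_h M A h \<phi>) else (\<exists>h>0. in_S_h M A h \<phi>))"

definition weight_class :: "bool \<Rightarrow> (nat \<Rightarrow> real) \<Rightarrow> (real^'n::finite \<Rightarrow> real) \<Rightarrow> bool" where
  "weight_class beurling M \<eta> \<longleftrightarrow> \<eta> \<in> borel_measurable lborel \<and> (\<forall>x. \<eta> x > 0) \<and>
     (if beurling
      then (\<exists>C \<tau>. C > 0 \<and> \<tau> > 0 \<and> (\<forall>x y. \<eta> (x + y) \<le> C * \<eta> x * exp (assoc_fn M (\<tau> * norm y))))
      else (\<forall>\<tau>>0. \<exists>C>0. \<forall>x y. \<eta> (x + y) \<le> C * \<eta> x * exp (assoc_fn M (\<tau> * norm y))))"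

definition inv_fourier :: "(real^'n::finite \<Rightarrow> complex) \<Rightarrow> real^'n \<Rightarrow> complex" where
  "inv_fourier g x = (LINT \<xi>|lborel. cis (2 * pi * (x \<bullet> \<xi>)) * g \<xi>)"

text \<open>\<open>\<parallel>g\<parallel>_{FL^1_\<eta>} = \<parallel>\<eta> f\<parallel>_{L^1}\<close> where \<open>g = F f\<close>, i.e. \<open>f = F^{-1} g\<close>
  (the functions here are in \<open>S^*_\<dagger>\<close>, where this is unambiguous); value in \<open>[0,\<infinity>]\<close>.\<close>
definition FL1_norm :: "(real^'n::finite \<Rightarrow> real) \<Rightarrow> (real^'n \<Rightarrow> complex) \<Rightarrow> ennreal" where
  "FL1_norm \<eta> g = (\<integral>\<^sup>+ x. ennreal (\<eta> x * norm (inv_fourier g x)) \<partial>lborel)"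

definition transl :: "real^'n::finite \<Rightarrow> (real^'n \<Rightarrow> complex) \<Rightarrow> real^'n \<Rightarrow> complex" where
  "transl x g = (\<lambda>t. g (t - x))"

definition UCPU :: "bool \<Rightarrow> (nat \<Rightarrow> real) \<Rightarrow> (nat \<Rightarrow> real) \<Rightarrow> 'l set \<Rightarrow>
    ('l \<Rightarrow> real^'n::finite \<Rightarrow> complex) \<Rightarrow> ('l \<Rightarrow> real^'n) \<Rightarrow> bool" where
  "UCPU beurling M A \<Lambda> \<psi> y \<longleftrightarrow>
     countable \<Lambda> \<and>
     (\<forall>l\<in>\<Lambda>. in_S beurling M A (\<psi> l)) \<and>
     (let unif = (\<lambda>h. \<exists>B. \<forall>l\<in>\<Lambda>. \<forall>\<alpha> x.
          h ^ mlen \<alpha> * norm (mderiv \<alpha> (\<psi> l) x) * exp (assoc_fn A (h * norm (x - y l))) / M (mlen \<alpha>) \<le> B)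
      in if beurling then (\<forall>h>0. unif h) else (\<exists>h>0. unif h)) \<and>
     (\<forall>K. compact K \<longrightarrow> (\<exists>CK::nat. \<forall>x. finite {l\<in>\<Lambda>. x \<in> (+) (y l) ` K} \<and>
                                        card {l\<in>\<Lambda>. x \<in> (+) (y l) ` K} \<le> CK)) \<and>
     (\<exists>U. open U \<and> bounded U \<and> 0 \<in> U \<and> UNIV = (\<Union>l\<in>\<Lambda>. (+) (y l) ` U)) \<and>
     (\<forall>x. ((\<lambda>l. \<psi> l x) has_sum 1) \<Lambda>)"

end

theory Submission
  imports Defs
begin

text \<open>
  Put \<open>g = \<psi>\<^sub>\<lambda> \<cdot> T\<^sub>x \<chi>\<close>. Leibniz' rule and \<open>M\<^sub>i M\<^sub>k\<^sub>-\<^sub>i \<le> M\<^sub>k\<close> bound the \<open>k\<close>-th derivative of \<open>g\<close> along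
  a coordinate axis by \<open>2^k M\<^sub>k / h^k\<close> times \<open>exp (- A (h |\<xi> - y\<^sub>\<lambda>|)) exp (- A (h |\<xi> - x|))\<close>,
  and (M.2) for \<open>A\<close> turns this product into \<open>exp (- A (h |y\<^sub>\<lambda> - x| / (4 H)))\<close> times an
  integrable function of \<open>\<xi>\<close>. Taking \<open>p\<close>-th forward differences along the axis of the largest
  coordinate of \<open>x'\<close> converts these bounds into \<open>|F^{-1} g (x')| \<le> C M\<^sub>p / (3 h |x'| / (2 n))^p\<close>
  for all \<open>p\<close> at once, i.e. into decay like \<open>exp (- M (3 h |x'| / (2 n)))\<close>. By (M.2) for \<open>M\<close> this
  absorbs the weight \<open>\<eta> (x') \<le> C exp (M (\<tau> |x'|))\<close> and leaves an integrable function as soon as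
  \<open>n H \<tau> \<le> h\<close>. Finally \<open>|y\<^sub>\<lambda> - x| \<ge> |y\<^sub>\<lambda> - y\<^sub>\<mu>| - R\<close> for \<open>x \<in> y\<^sub>\<mu> + K\<close>. In the Beurling case \<open>h\<close> is
  chosen large in terms of \<open>h'\<close> and \<open>\<tau>\<close>, in the Roumieu case \<open>\<tau>\<close> small in terms of \<open>h\<close>.

  Only the derivative bounds of the partition of unity enter; neither (M.2)* nor the covering
  and summation properties of a UCPU are needed.
\<close>

section \<open>Weight sequences and their associated functions\<close>

lemma weight_seq_pos: "weight_seq W \<Longrightarrow> W p > 0"
  by (simp add: weight_seq_def)

lemma weight_seq_0: "weight_seq W \<Longrightarrow> W 0 = 1"
  by (simp add: weight_seq_def)

lemma weight_seq_quotient_mono: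
  assumes W: "weight_seq W" and "1 \<le> i"
  shows "W i / W (i - 1) \<le> W (i + q) / W (i + q - 1)"
proof (induction q)
  case (Suc q)
  have pos: "\<And>p. W p > 0" using W weight_seq_pos by blast
  have "(W (i + q))\<^sup>2 \<le> W (i + q - 1) * W (i + q + 1)"
    using W \<open>1 \<le> i\<close> unfolding weight_seq_def seq_M1_def by simp
  then have "W (i + q) / W (i + q - 1) \<le> W (i + Suc q) / W (i + q)"
    using pos[of "i + q"] pos[of "i + q - 1"]
    by (simp add: divide_simps power2_eq_square mult.commute)
  with Suc show ?case by simp
qed simp

lemma weight_seq_mult_le:
  assumes W: "weight_seq W"
  shows "W k * W q \<le> W (k + q)"
proof (induction k)
  case 0
  then show ?case using weight_seq_0[OF W] by simp
next
  case (Suc k)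
  have pos: "\<And>p. W p > 0" using W weight_seq_pos by blast
  have "W (Suc k) * W q = (W (Suc k) / W k) * (W k * W q)"
    using pos[of k] by simp
  also have "\<dots> \<le> (W (Suc k + q) / W (k + q)) * W (k + q)"
    using weight_seq_quotient_mono[OF W, of "Suc k" q] Suc pos
    by (intro mult_mono) (auto intro: less_imp_le)
  also have "\<dots> = W (Suc k + q)" using pos[of "k + q"] by simp
  finally show ?case .
qed

lemma power_div_fact_le_exp:
  assumes "(x::real) \<ge> 0"
  shows "x ^ n / fact n \<le> exp x"
proof -
  have "summable (\<lambda>n. x ^ n /\<^sub>R fact n)"
    using exp_converges[of x] sums_summable by blast
  then have "sum (\<lambda>n. x ^ n /\<^sub>R fact n) {n} \<le> suminf (\<lambda>n. x ^ n /\<^sub>R fact n)"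
    by (rule sum_le_suminf) (use assms in auto)
  then show ?thesis
    using exp_converges[of x] sums_unique by (fastforce simp: divide_inverse mult.commute)
qed

lemma bdd_above_assoc_fn:
  assumes W: "weight_seq W" and "\<rho> > 0"
  shows "bdd_above (range (\<lambda>p. ln (\<rho> ^ p / W p)))"
proof -
  obtain c0 L0 where c: "c0 \<ge> 1" "L0 \<ge> 1" "\<And>p. fact p \<le> c0 * L0 ^ p * W p"
    using W unfolding weight_seq_def seq_M6_def by blast
  have pos: "\<And>p. W p > 0" using W weight_seq_pos by blast
  have "ln (\<rho> ^ p / W p) \<le> ln (c0 * exp (L0 * \<rho>))" for p
  proof -
    have "\<rho> ^ p / W p \<le> \<rho> ^ p * (c0 * L0 ^ p / fact p)"
      using c(3)[of p] pos[of p] \<open>\<rho> > 0\<close> c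
      by (simp add: divide_simps) (simp add: mult_left_mono mult.assoc mult.left_commute)
    also have "\<dots> = c0 * ((L0 * \<rho>) ^ p / fact p)"
      by (simp add: power_mult_distrib field_simps)
    also have "\<dots> \<le> c0 * exp (L0 * \<rho>)"
      using power_div_fact_le_exp[of "L0 * \<rho>" p] c \<open>\<rho> > 0\<close> by (intro mult_left_mono) auto
    finally show ?thesis using \<open>\<rho> > 0\<close> pos[of p] c by (subst ln_le_cancel_iff) auto
  qed
  then show ?thesis by (intro bdd_aboveI2)
qed

lemma power_div_le_exp_assoc_fn:
  assumes W: "weight_seq W" and "\<rho> \<ge> 0"
  shows "\<rho> ^ p / W p \<le> exp (assoc_fn W \<rho>)"
proof (cases "\<rho> = 0")
  case True
  then show ?thesis using weight_seq_0[OF W] by (cases p) (auto simp: assoc_fn_def)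
next
  case False
  then have \<rho>: "\<rho> > 0" using assms by simp
  have "ln (\<rho> ^ p / W p) \<le> (SUP p. ln (\<rho> ^ p / W p))"
    by (rule cSUP_upper[OF _ bdd_above_assoc_fn[OF W \<rho>]]) simp
  then have "ln (\<rho> ^ p / W p) \<le> assoc_fn W \<rho>" using \<rho> by (simp add: assoc_fn_def)
  then show ?thesis using \<rho> weight_seq_pos[OF W, of p]
    by (metis exp_le_cancel_iff exp_ln divide_pos_pos zero_less_power)
qed

lemma assoc_fn_nonneg:
  assumes W: "weight_seq W"
  shows "assoc_fn W \<rho> \<ge> 0"
proof (cases "\<rho> \<le> 0")
  case False
  have "\<rho> ^ 0 / W 0 \<le> exp (assoc_fn W \<rho>)"
    using False by (intro power_div_le_exp_assoc_fn[OF W]) auto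
  then show ?thesis using weight_seq_0[OF W] by simp
qed (simp add: assoc_fn_def)

lemma exp_assoc_fn_le:
  assumes W: "weight_seq W" and "\<rho> \<ge> 0" and bound: "\<And>p. \<rho> ^ p / W p \<le> E"
  shows "exp (assoc_fn W \<rho>) \<le> E"
proof (cases "\<rho> = 0")
  case True
  then show ?thesis using bound[of 0] weight_seq_0[OF W] by (simp add: assoc_fn_def)
next
  case False
  then have \<rho>: "\<rho> > 0" using assms by simp
  have E: "E > 0" using bound[of 0] weight_seq_0[OF W] by simp
  have "(SUP p. ln (\<rho> ^ p / W p)) \<le> ln E"
  proof (rule cSUP_least)
    fix p
    show "ln (\<rho> ^ p / W p) \<le> ln E"
      using bound[of p] \<rho> weight_seq_pos[OF W, of p] E by (subst ln_le_cancel_iff) auto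
  qed simp
  then have "assoc_fn W \<rho> \<le> ln E" using \<rho> by (simp add: assoc_fn_def)
  then show ?thesis using E by (metis exp_le_cancel_iff exp_ln)
qed

lemma assoc_fn_mono:
  assumes W: "weight_seq W" and "0 \<le> a" "a \<le> b"
  shows "assoc_fn W a \<le> assoc_fn W b"
proof -
  have "exp (assoc_fn W a) \<le> exp (assoc_fn W b)"
  proof (rule exp_assoc_fn_le[OF W \<open>0 \<le> a\<close>])
    fix p
    have "a ^ p / W p \<le> b ^ p / W p"
      using assms weight_seq_pos[OF W, of p] by (intro divide_right_mono power_mono) auto
    also have "\<dots> \<le> exp (assoc_fn W b)"
      using assms by (intro power_div_le_exp_assoc_fn) auto
    finally show "a ^ p / W p \<le> exp (assoc_fn W b)" .
  qed
  then show ?thesis by simp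
qed

lemma assoc_fn_add_le:
  assumes W: "weight_seq W" and "0 \<le> a" "0 \<le> b"
  shows "assoc_fn W (a + b) \<le> assoc_fn W (2 * a) + assoc_fn W (2 * b)"
proof -
  have "assoc_fn W (a + b) \<le> assoc_fn W (2 * max a b)"
    using assms by (intro assoc_fn_mono) auto
  also have "\<dots> \<le> assoc_fn W (2 * a) + assoc_fn W (2 * b)"
    using assoc_fn_nonneg[OF W, of "2 * a"] assoc_fn_nonneg[OF W, of "2 * b"]
    by (simp add: max_def)
  finally show ?thesis .
qed

lemma exp_neg_assoc_fn_shift_le:
  assumes W: "weight_seq W" and "a \<ge> 0" and "norm (u - v) \<le> R"
  shows "exp (- assoc_fn W (2 * a * norm u)) \<le> exp (assoc_fn W (2 * a * R)) * exp (- assoc_fn W (a * norm v))"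
proof -
  have "norm v \<le> norm u + R"
    using norm_triangle_ineq2[of v u] assms(3) by (simp add: norm_minus_commute)
  then have "a * norm v \<le> a * norm u + a * R"
    using \<open>a \<ge> 0\<close> by (simp add: mult_left_mono distrib_left[symmetric])
  then have "assoc_fn W (a * norm v) \<le> assoc_fn W (a * norm u + a * R)"
    using \<open>a \<ge> 0\<close> by (intro assoc_fn_mono[OF W]) auto
  also have "\<dots> \<le> assoc_fn W (2 * a * norm u) + assoc_fn W (2 * a * R)"
    using assoc_fn_add_le[OF W, of "a * norm u" "a * R"] \<open>a \<ge> 0\<close> order_trans[OF norm_ge_zero assms(3)]
    by (simp add: mult.assoc)
  finally show ?thesis by (simp add: exp_add[symmetric])
qed

lemma le_exp_neg_assoc_fn:
  assumes W: "weight_seq W" and "r \<ge> 0" "f \<ge> 0"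
    and bound: "\<And>p. f \<le> Q * W p / r ^ p"
  shows "f \<le> Q * exp (- assoc_fn W r)"
proof -
  have Q: "Q \<ge> 0" using bound[of 0] \<open>f \<ge> 0\<close> weight_seq_0[OF W] by simp
  show ?thesis
  proof (cases "f = 0")
    case True
    then show ?thesis using Q by simp
  next
    case False
    then have f: "f > 0" using \<open>f \<ge> 0\<close> by simp
    have "exp (assoc_fn W r) \<le> Q / f"
    proof (rule exp_assoc_fn_le[OF W \<open>r \<ge> 0\<close>])
      fix p
      show "r ^ p / W p \<le> Q / f"
      proof (cases "r = 0 \<and> p > 0")
        case True
        then show ?thesis using Q f weight_seq_pos[OF W, of p] by (simp add: zero_power)
      next
        case False
        then have rp: "r ^ p > 0" using \<open>r \<ge> 0\<close> by (cases "r = 0") auto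
        have "f * r ^ p \<le> Q * W p" using bound[of p] rp by (simp add: pos_le_divide_eq)
        then show ?thesis using rp weight_seq_pos[OF W, of p] f by (simp add: divide_simps mult.commute)
      qed
    qed
    then have "f * exp (assoc_fn W r) \<le> Q" using f by (simp add: pos_le_divide_eq mult.commute)
    then show ?thesis by (simp add: exp_minus pos_le_divide_eq divide_inverse[symmetric])
  qed
qed

lemma exp_assoc_fn_sq_le:
  assumes W: "weight_seq W" and "\<rho> \<ge> 0"
    and bound: "\<And>p q. \<rho> ^ p / W p * (\<rho> ^ q / W q) \<le> E"
  shows "exp (assoc_fn W \<rho>) ^ 2 \<le> E"
proof -
  have E: "E \<ge> 0" using bound[of 0 0] weight_seq_0[OF W] by simp
  have "exp (assoc_fn W \<rho>) * (\<rho> ^ q / W q) \<le> E" for q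
  proof (cases "\<rho> ^ q / W q = 0")
    case False
    then have pos: "\<rho> ^ q / W q > 0"
      using \<open>\<rho> \<ge> 0\<close> weight_seq_pos[OF W, of q] by (simp add: order_le_neq_trans)
    have "exp (assoc_fn W \<rho>) \<le> E / (\<rho> ^ q / W q)"
    proof (rule exp_assoc_fn_le[OF W \<open>\<rho> \<ge> 0\<close>])
      fix p
      show "\<rho> ^ p / W p \<le> E / (\<rho> ^ q / W q)"
        using bound[of p q] pos by (simp only: pos_le_divide_eq)
    qed
    then show ?thesis using pos by (simp only: pos_le_divide_eq)
  qed (metis E mult_zero_right)
  then have "exp (assoc_fn W \<rho>) \<le> E / exp (assoc_fn W \<rho>)"
    by (intro exp_assoc_fn_le[OF W \<open>\<rho> \<ge> 0\<close>]) (simp add: pos_le_divide_eq mult.commute)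
  then show ?thesis by (simp add: pos_le_divide_eq power2_eq_square)
qed

text \<open>Condition (M.2) restated for the associated function (Komatsu, Proposition 3.6):
  \<open>2 W(\<rho>) \<le> W(H \<rho>) + ln c\<^sub>0\<close>.\<close>

definition assoc_M2 :: "(nat \<Rightarrow> real) \<Rightarrow> real \<Rightarrow> real \<Rightarrow> bool" where
  "assoc_M2 W c0 H \<longleftrightarrow> c0 \<ge> 1 \<and> H \<ge> 1 \<and>
     (\<forall>\<rho>\<ge>0. exp (- assoc_fn W (H * \<rho>)) \<le> c0 * exp (- assoc_fn W \<rho>) ^ 2)"

lemma assoc_M2_exists:
  assumes W: "weight_seq W"
  obtains c0 H where "assoc_M2 W c0 H"
proof -
  obtain c0 H where c: "c0 \<ge> 1" "H \<ge> 1" and M2: "\<And>p q. W (p + q) \<le> c0 * H ^ (p + q) * W p * W q"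
    using W unfolding weight_seq_def seq_M2_def by blast
  have pos: "\<And>p. W p > 0" using W weight_seq_pos by blast
  have sq: "exp (assoc_fn W \<rho>) ^ 2 \<le> c0 * exp (assoc_fn W (H * \<rho>))" if "\<rho> \<ge> 0" for \<rho>
  proof (rule exp_assoc_fn_sq_le[OF W that])
    fix p q
    have "W (p + q) * \<rho> ^ (p + q) \<le> (c0 * H ^ (p + q) * W p * W q) * \<rho> ^ (p + q)"
      using M2[of p q] that by (intro mult_right_mono) auto
    then have "\<rho> ^ p / W p * (\<rho> ^ q / W q) \<le> c0 * ((H * \<rho>) ^ (p + q) / W (p + q))"
      using pos[of p] pos[of q] pos[of "p + q"]
      by (simp add: divide_simps power_mult_distrib power_add mult_ac)
    also have "\<dots> \<le> c0 * exp (assoc_fn W (H * \<rho>))"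
      using c that by (intro mult_left_mono power_div_le_exp_assoc_fn[OF W]) auto
    finally show "\<rho> ^ p / W p * (\<rho> ^ q / W q) \<le> c0 * exp (assoc_fn W (H * \<rho>))" .
  qed
  have inv: "inverse (c0 * exp (assoc_fn W (H * \<rho>))) \<le> inverse (exp (assoc_fn W \<rho>) ^ 2)"
    if "\<rho> \<ge> 0" for \<rho>
    by (rule le_imp_inverse_le[OF sq[OF that]]) simp
  have "exp (- assoc_fn W (H * \<rho>)) \<le> c0 * exp (- assoc_fn W \<rho>) ^ 2" if "\<rho> \<ge> 0" for \<rho>
    using inv[OF that] c by (simp add: exp_minus power_inverse field_simps)
  with c show ?thesis by (intro that[of c0 H]) (simp add: assoc_M2_def)
qed

text \<open>Of the two factors \<open>exp (- W (a |\<xi> - y|))\<close> produced by (M.2), one is spent on the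
  distance \<open>|y - x|\<close>; the other is kept as decay in \<open>\<xi>\<close>.\<close>

lemma exp_neg_assoc_fn_mult_split:
  assumes W: "weight_seq W" and c0H: "assoc_M2 W c0 H" and "a \<ge> 0"
  shows "exp (- assoc_fn W (H * a * norm (\<xi> - y))) * exp (- assoc_fn W (H * a * norm (\<xi> - x)))
     \<le> c0\<^sup>2 * exp (- assoc_fn W (a / 2 * norm (y - x))) * exp (- assoc_fn W (a * norm (\<xi> - x)))"
proof -
  let ?e1 = "exp (- assoc_fn W (a * norm (\<xi> - y)))" and ?e2 = "exp (- assoc_fn W (a * norm (\<xi> - x)))"
  have c0: "c0 \<ge> 1"
    and M2: "\<And>\<rho>. \<rho> \<ge> 0 \<Longrightarrow> exp (- assoc_fn W (H * \<rho>)) \<le> c0 * exp (- assoc_fn W \<rho>) ^ 2"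
    using c0H unfolding assoc_M2_def by auto
  have e1: "exp (- assoc_fn W (H * a * norm (\<xi> - y))) \<le> c0 * ?e1 ^ 2"
    using M2[of "a * norm (\<xi> - y)"] \<open>a \<ge> 0\<close> by (simp add: mult.assoc)
  have e2: "exp (- assoc_fn W (H * a * norm (\<xi> - x))) \<le> c0 * ?e2 ^ 2"
    using M2[of "a * norm (\<xi> - x)"] \<open>a \<ge> 0\<close> by (simp add: mult.assoc)
  have le1: "?e1 \<le> 1" "?e2 \<le> 1" using assoc_fn_nonneg[OF W] by auto
  have "?e1 * ?e2 \<le> exp (- assoc_fn W (a / 2 * norm (y - x)))"
  proof -
    have "norm (y - x) \<le> norm (\<xi> - y) + norm (\<xi> - x)"
      using norm_triangle_ineq4[of "\<xi> - x" "\<xi> - y"] by (simp add: norm_minus_commute algebra_simps)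
    then have "a * norm (y - x) \<le> a * norm (\<xi> - y) + a * norm (\<xi> - x)"
      using \<open>a \<ge> 0\<close> by (simp add: mult_left_mono flip: distrib_left)
    then have "a / 2 * norm (y - x) \<le> max (a * norm (\<xi> - y)) (a * norm (\<xi> - x))"
      by (simp add: max_def)
    then have "assoc_fn W (a / 2 * norm (y - x)) \<le> assoc_fn W (max (a * norm (\<xi> - y)) (a * norm (\<xi> - x)))"
      using \<open>a \<ge> 0\<close> by (intro assoc_fn_mono[OF W]) auto
    also have "\<dots> \<le> assoc_fn W (a * norm (\<xi> - y)) + assoc_fn W (a * norm (\<xi> - x))"
      using assoc_fn_nonneg[OF W] by (simp add: max_def)
    finally show ?thesis by (simp add: exp_add[symmetric])
  qed
  note key = this
  have "exp (- assoc_fn W (H * a * norm (\<xi> - y))) * exp (- assoc_fn W (H * a * norm (\<xi> - x)))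
      \<le> (c0 * ?e1 ^ 2) * (c0 * ?e2 ^ 2)"
    using e1 e2 c0 by (intro mult_mono) auto
  also have "\<dots> = c0\<^sup>2 * (?e1 * ?e2) * (?e1 * ?e2)"
    by (simp add: power2_eq_square mult_ac)
  also have "\<dots> \<le> c0\<^sup>2 * exp (- assoc_fn W (a / 2 * norm (y - x))) * ?e2"
    using key le1 by (intro mult_mono mult_left_mono) (auto simp: mult_le_one)
  finally show ?thesis .
qed

section \<open>Derivatives along a coordinate axis\<close>

lemma sum_binomial_pascal:
  fixes f :: "nat \<Rightarrow> nat \<Rightarrow> 'a::comm_ring_1"
  shows "(\<Sum>i\<le>k. of_nat (k choose i) * (f i (Suc k - i) + f (Suc i) (k - i))) =
         (\<Sum>i\<le>Suc k. of_nat (Suc k choose i) * f i (Suc k - i))"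
proof -
  have "(\<Sum>i\<le>k. of_nat (k choose i) * f i (Suc k - i)) =
        (\<Sum>i\<le>Suc k. of_nat (k choose i) * f i (Suc k - i))"
    by (simp add: binomial_eq_0)
  also have "\<dots> = f 0 (Suc k) + (\<Sum>i\<le>k. of_nat (k choose Suc i) * f (Suc i) (k - i))"
    by (subst sum.atMost_Suc_shift) (simp add: binomial_eq_0)
  finally show ?thesis
    by (subst sum.atMost_Suc_shift) (simp add: sum.distrib algebra_simps)
qed

lemma has_vector_derivative_partial:
  assumes "\<And>x. (\<lambda>t. f (x + t *\<^sub>R axis j 1)) differentiable (at 0)"
  shows "((\<lambda>t. f (\<xi> + t *\<^sub>R axis j 1)) has_vector_derivative partial j f (\<xi> + t0 *\<^sub>R axis j 1)) (at t0)"
proof -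
  let ?g = "\<lambda>t. f ((\<xi> + t0 *\<^sub>R axis j 1) + t *\<^sub>R axis j 1)"
  have g: "(?g has_vector_derivative partial j f (\<xi> + t0 *\<^sub>R axis j 1)) (at 0)"
    unfolding partial_def using assms vector_derivative_works by blast
  have "((?g \<circ> (\<lambda>t. t - t0)) has_vector_derivative (1 *\<^sub>R partial j f (\<xi> + t0 *\<^sub>R axis j 1))) (at t0)"
    by (rule vector_diff_chain_at) (auto intro!: derivative_eq_intros simp: g)
  moreover have "?g \<circ> (\<lambda>t. t - t0) = (\<lambda>t. f (\<xi> + t *\<^sub>R axis j 1))"
    by (rule ext) (simp add: algebra_simps)
  ultimately show ?thesis by simp
qed

definition smooth_along :: "'n::finite \<Rightarrow> (real^'n \<Rightarrow> complex) \<Rightarrow> bool" where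
  "smooth_along j f \<longleftrightarrow>
     (\<forall>k x. (\<lambda>t. dlist (replicate k j) f (x + t *\<^sub>R axis j 1)) differentiable (at 0))"

lemma smooth_fn_imp_smooth_along: "smooth_fn f \<Longrightarrow> smooth_along j f"
  unfolding smooth_fn_def smooth_along_def by blast

lemma smooth_along_has_vector_derivative:
  assumes "smooth_along j f"
  shows "((\<lambda>t. dlist (replicate k j) f (\<xi> + t *\<^sub>R axis j 1)) has_vector_derivative
          dlist (replicate (Suc k) j) f (\<xi> + t0 *\<^sub>R axis j 1)) (at t0)"
  using has_vector_derivative_partial[of "dlist (replicate k j) f" j \<xi> t0] assms
  unfolding smooth_along_def by simp

lemma leibniz_sum_has_vector_derivative:
  assumes a: "smooth_along j a" and b: "smooth_along j b"
  shows "((\<lambda>t. \<Sum>i\<le>k. of_nat (k choose i) *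
            (dlist (replicate i j) a (\<xi> + t *\<^sub>R axis j 1) * dlist (replicate (k - i) j) b (\<xi> + t *\<^sub>R axis j 1)))
         has_vector_derivative
           (\<Sum>i\<le>Suc k. of_nat (Suc k choose i) *
            (dlist (replicate i j) a \<xi> * dlist (replicate (Suc k - i) j) b \<xi>))) (at 0)"
proof -
  let ?a = "\<lambda>i. dlist (replicate i j) a (\<xi> + 0 *\<^sub>R axis j 1)"
    and ?b = "\<lambda>i. dlist (replicate i j) b (\<xi> + 0 *\<^sub>R axis j 1)"
  have "((\<lambda>t. \<Sum>i\<le>k. of_nat (k choose i) *
            (dlist (replicate i j) a (\<xi> + t *\<^sub>R axis j 1) * dlist (replicate (k - i) j) b (\<xi> + t *\<^sub>R axis j 1)))
         has_vector_derivative
           (\<Sum>i\<le>k. of_nat (k choose i) * (?a i * ?b (Suc (k - i)) + ?a (Suc i) * ?b (k - i)))) (at 0)"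
    by (intro has_vector_derivative_sum has_vector_derivative_mult_right
        has_vector_derivative_mult smooth_along_has_vector_derivative a b)
  also have "(\<Sum>i\<le>k. of_nat (k choose i) * (?a i * ?b (Suc (k - i)) + ?a (Suc i) * ?b (k - i))) =
      (\<Sum>i\<le>Suc k. of_nat (Suc k choose i) * (dlist (replicate i j) a \<xi> * dlist (replicate (Suc k - i) j) b \<xi>))"
    using sum_binomial_pascal[of k "\<lambda>i l. dlist (replicate i j) a \<xi> * dlist (replicate l j) b \<xi>"]
    by (simp add: Suc_diff_le)
  finally show ?thesis .
qed

lemma dlist_replicate_mult:
  assumes "smooth_along j a" and "smooth_along j b"
  shows "dlist (replicate k j) (\<lambda>\<xi>. a \<xi> * b \<xi>) \<xi> =
     (\<Sum>i\<le>k. of_nat (k choose i) * (dlist (replicate i j) a \<xi> * dlist (replicate (k - i) j) b \<xi>))"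
proof (induction k arbitrary: \<xi>)
  case (Suc k)
  have "dlist (replicate (Suc k) j) (\<lambda>\<xi>. a \<xi> * b \<xi>) \<xi> =
      vector_derivative (\<lambda>t. dlist (replicate k j) (\<lambda>\<xi>. a \<xi> * b \<xi>) (\<xi> + t *\<^sub>R axis j 1)) (at 0)"
    by (simp add: partial_def)
  also have "\<dots> = (\<Sum>i\<le>Suc k. of_nat (Suc k choose i) *
                    (dlist (replicate i j) a \<xi> * dlist (replicate (Suc k - i) j) b \<xi>))"
    unfolding Suc.IH by (rule vector_derivative_at[OF leibniz_sum_has_vector_derivative[OF assms]])
  finally show ?case .
qed simp

lemma smooth_along_mult:
  assumes "smooth_along j a" and "smooth_along j b"
  shows "smooth_along j (\<lambda>\<xi>. a \<xi> * b \<xi>)"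
  unfolding smooth_along_def dlist_replicate_mult[OF assms]
  using leibniz_sum_has_vector_derivative[OF assms] by (blast intro: differentiableI_vector)

lemma partial_transl: "partial i (transl x f) = transl x (partial i f)"
  by (rule ext) (simp add: partial_def transl_def algebra_simps)

lemma dlist_transl: "dlist ds (transl x f) = transl x (dlist ds f)"
  by (induction ds) (simp_all add: partial_transl)

lemma smooth_along_transl:
  assumes "smooth_along j f"
  shows "smooth_along j (transl x f)"
proof -
  have "(\<lambda>t. dlist (replicate k j) f ((z - x) + t *\<^sub>R axis j 1)) differentiable (at 0)" for k z
    using assms unfolding smooth_along_def by blast
  then show ?thesis
    unfolding smooth_along_def dlist_transl by (simp add: transl_def algebra_simps)
qed

text \<open>The binomial coefficients are absorbed by \<open>W\<^sub>i W\<^sub>k\<^sub>-\<^sub>i \<le> W\<^sub>k\<close>, at the price of \<open>2\<^sup>k\<close>.\<close>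

lemma norm_dlist_replicate_mult_le:
  fixes a b :: "real^'n::finite \<Rightarrow> complex"
  assumes W: "weight_seq W" and "h > 0"
    and a: "smooth_along j a" and b: "smooth_along j b"
    and "Ba \<ge> 0" "Bb \<ge> 0" "ea \<ge> 0" "eb \<ge> 0"
    and bound_a: "\<And>i. norm (dlist (replicate i j) a \<xi>) \<le> Ba * W i / h ^ i * ea"
    and bound_b: "\<And>i. norm (dlist (replicate i j) b \<xi>) \<le> Bb * W i / h ^ i * eb"
  shows "norm (dlist (replicate k j) (\<lambda>\<xi>. a \<xi> * b \<xi>) \<xi>) \<le> Ba * Bb * 2 ^ k * W k / h ^ k * (ea * eb)"
proof -
  have "norm (dlist (replicate k j) (\<lambda>\<xi>. a \<xi> * b \<xi>) \<xi>) \<le>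
      (\<Sum>i\<le>k. real (k choose i) * (norm (dlist (replicate i j) a \<xi>) * norm (dlist (replicate (k - i) j) b \<xi>)))"
    unfolding dlist_replicate_mult[OF a b] by (rule order_trans[OF norm_sum]) (simp add: norm_mult)
  also have "\<dots> \<le> (\<Sum>i\<le>k. real (k choose i) * (Ba * Bb * W k / h ^ k * (ea * eb)))"
  proof (rule sum_mono)
    fix i assume i: "i \<in> {..k}"
    have "norm (dlist (replicate i j) a \<xi>) * norm (dlist (replicate (k - i) j) b \<xi>)
        \<le> (Ba * W i / h ^ i * ea) * (Bb * W (k - i) / h ^ (k - i) * eb)"
      using weight_seq_pos[OF W] assms
      by (intro mult_mono bound_a bound_b) (auto intro!: divide_nonneg_pos simp: less_imp_le)
    also have "\<dots> = Ba * Bb * (W i * W (k - i)) / h ^ k * (ea * eb)"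
      using i \<open>h > 0\<close> by (simp add: field_simps power_add[symmetric])
    also have "\<dots> \<le> Ba * Bb * W k / h ^ k * (ea * eb)"
      using i assms weight_seq_mult_le[OF W, of i "k - i"]
      by (intro mult_left_mono mult_right_mono divide_right_mono) auto
    finally show "real (k choose i) * (norm (dlist (replicate i j) a \<xi>) * norm (dlist (replicate (k - i) j) b \<xi>))
        \<le> real (k choose i) * (Ba * Bb * W k / h ^ k * (ea * eb))"
      by (rule mult_left_mono) simp
  qed
  also have "\<dots> = 2 ^ k * (Ba * Bb * W k / h ^ k * (ea * eb))"
  proof -
    have "(\<Sum>i\<le>k. real (k choose i)) = 2 ^ k"
      using choose_row_sum[of k] by (metis of_nat_numeral of_nat_power of_nat_sum)
    then show ?thesis by (simp only: sum_distrib_right[symmetric])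
  qed
  finally show ?thesis by (simp add: mult_ac)
qed

section \<open>Finite differences and the inverse Fourier transform\<close>

lemma norm_diff_le_of_vector_derivative_le:
  fixes f :: "real \<Rightarrow> 'a::real_normed_vector"
  assumes f': "\<And>t. (f has_vector_derivative f' t) (at t)"
    and bound: "\<And>t. min a b \<le> t \<Longrightarrow> t \<le> max a b \<Longrightarrow> norm (f' t) \<le> B"
  shows "norm (f b - f a) \<le> B * \<bar>b - a\<bar>"
proof -
  have *: "norm (f v - f u) \<le> B * (v - u)"
    if "u < v" and "\<And>t. u \<le> t \<Longrightarrow> t \<le> v \<Longrightarrow> norm (f' t) \<le> B" for u v
  proof -
    have "norm (f v - f u) \<le> B * v - B * u"
    proof (rule differentiable_bound_general[OF \<open>u < v\<close>, where f' = f' and \<phi>' = "\<lambda>_. B"])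
      show "continuous_on {u..v} f"
        using f' by (intro continuous_on_vector_derivative) (auto intro: has_vector_derivative_at_within)
      show "\<And>x. ((*) B has_vector_derivative B) (at x)"
        by (auto intro!: derivative_eq_intros simp flip: has_real_derivative_iff_has_vector_derivative)
    qed (use f' that in \<open>auto intro!: continuous_intros\<close>)
    then show ?thesis by (simp add: algebra_simps)
  qed
  show ?thesis
  proof (cases a b rule: linorder_cases)
    case less
    then show ?thesis using *[of a b] bound by auto
  next
    case greater
    then show ?thesis using *[of b a] bound by (auto simp: norm_minus_commute)
  qed simp
qed

fun forward_diff :: "'a::ab_group_add \<Rightarrow> nat \<Rightarrow> ('a \<Rightarrow> 'b::ab_group_add) \<Rightarrow> 'a \<Rightarrow> 'b" where
  "forward_diff v 0 g = g"
| "forward_diff v (Suc p) g = forward_diff v p (\<lambda>\<xi>. g (\<xi> + v) - g \<xi>)"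

lemma norm_forward_diff_le:
  fixes \<phi> :: "nat \<Rightarrow> real \<Rightarrow> 'a::real_normed_vector"
  assumes "\<And>k t. (\<phi> k has_vector_derivative \<phi> (Suc k) t) (at t)"
    and "\<And>t. \<bar>t - a\<bar> \<le> real p * \<bar>s\<bar> \<Longrightarrow> norm (\<phi> p t) \<le> B"
  shows "norm (forward_diff s p (\<phi> 0) a) \<le> \<bar>s\<bar> ^ p * B"
  using assms
proof (induction p arbitrary: \<phi> B)
  case (Suc p)
  let ?\<psi> = "\<lambda>k t. \<phi> k (t + s) - \<phi> k t"
  have "(?\<psi> k has_vector_derivative ?\<psi> (Suc k) t) (at t)" for k t
  proof -
    have "((\<phi> k \<circ> (\<lambda>t. t + s)) has_vector_derivative (1 *\<^sub>R \<phi> (Suc k) (t + s))) (at t)"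
      by (rule vector_diff_chain_at) (auto intro!: derivative_eq_intros Suc.prems(1))
    then show ?thesis by (intro has_vector_derivative_diff Suc.prems(1)) (simp add: o_def)
  qed
  moreover have "norm (?\<psi> p t) \<le> \<bar>s\<bar> * B" if t: "\<bar>t - a\<bar> \<le> real p * \<bar>s\<bar>" for t
  proof -
    have "norm (\<phi> p (t + s) - \<phi> p t) \<le> B * \<bar>(t + s) - t\<bar>"
    proof (rule norm_diff_le_of_vector_derivative_le[OF Suc.prems(1)])
      fix u assume "min t (t + s) \<le> u" "u \<le> max t (t + s)"
      then have "\<bar>u - a\<bar> \<le> real (Suc p) * \<bar>s\<bar>"
        using t by (auto simp: min_def max_def algebra_simps split: if_splits)
      then show "norm (\<phi> (Suc p) u) \<le> B" by (rule Suc.prems(2))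
    qed
    then show ?thesis by (simp add: mult.commute)
  qed
  ultimately have "norm (forward_diff s p (?\<psi> 0) a) \<le> \<bar>s\<bar> ^ p * (\<bar>s\<bar> * B)"
    by (intro Suc.IH)
  then show ?case by (simp add: mult_ac)
qed simp

lemma forward_diff_along_axis:
  "forward_diff (s *\<^sub>R axis j 1) p g (\<xi> + t *\<^sub>R axis j 1) = forward_diff s p (\<lambda>t. g (\<xi> + t *\<^sub>R axis j 1)) t"
proof (induction p arbitrary: g t)
  case (Suc p)
  have "(\<lambda>t. g (\<xi> + t *\<^sub>R axis j 1 + s *\<^sub>R axis j 1) - g (\<xi> + t *\<^sub>R axis j 1)) =
        (\<lambda>t. g (\<xi> + (t + s) *\<^sub>R axis j 1) - g (\<xi> + t *\<^sub>R axis j 1))"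
    by (simp add: scaleR_add_left add.assoc)
  then show ?case using Suc.IH[of "\<lambda>\<xi>. g (\<xi> + s *\<^sub>R axis j 1) - g \<xi>" t] by simp
qed simp

lemma integrable_lborel_translate:
  fixes g :: "'a::euclidean_space \<Rightarrow> 'b::{banach, second_countable_topology}"
  assumes "integrable lborel g"
  shows "integrable lborel (\<lambda>\<xi>. g (\<xi> + v))"
proof -
  have "integrable (distr lborel borel ((+) v)) g"
    using assms by (simp add: lborel_distr_plus)
  then have "integrable lborel (\<lambda>\<xi>. g (v + \<xi>))"
    using assms by (subst (asm) integrable_distr_eq) (auto simp: borel_measurable_integrable)
  then show ?thesis by (simp add: add.commute)
qed

lemma integral_lborel_translate:
  fixes g :: "'a::euclidean_space \<Rightarrow> 'b::{banach, second_countable_topology}"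
  assumes "g \<in> borel_measurable borel"
  shows "integral\<^sup>L lborel (\<lambda>\<xi>. g (\<xi> + v)) = integral\<^sup>L lborel g"
proof -
  have "integral\<^sup>L lborel g = integral\<^sup>L (distr lborel borel ((+) v)) g"
    by (simp add: lborel_distr_plus)
  also have "\<dots> = integral\<^sup>L lborel (\<lambda>\<xi>. g (v + \<xi>))"
    by (rule integral_distr) (use assms in auto)
  finally show ?thesis by (simp add: add.commute)
qed

lemma borel_measurable_cis_inner [measurable]:
  "(\<lambda>\<xi>::real^'n::finite. cis (2 * pi * (x \<bullet> \<xi>))) \<in> borel_measurable borel"
  by (intro borel_measurable_continuous_onI continuous_intros)

lemma integrable_cis_mult:
  fixes g :: "real^'n::finite \<Rightarrow> complex"
  assumes "integrable lborel g"
  shows "integrable lborel (\<lambda>\<xi>. cis (2 * pi * (x \<bullet> \<xi>)) * g \<xi>)"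
proof (rule Bochner_Integration.integrable_bound[OF assms])
  have "g \<in> borel_measurable borel" using assms by (simp add: borel_measurable_integrable)
  then show "(\<lambda>\<xi>. cis (2 * pi * (x \<bullet> \<xi>)) * g \<xi>) \<in> borel_measurable lborel"
    by measurable
qed (simp add: norm_mult)

lemma inv_fourier_translate:
  fixes g :: "real^'n::finite \<Rightarrow> complex"
  assumes "integrable lborel g"
  shows "inv_fourier (\<lambda>\<xi>. g (\<xi> + v)) x = cis (- (2 * pi * (x \<bullet> v))) * inv_fourier g x"
proof -
  have "g \<in> borel_measurable borel" using assms by (simp add: borel_measurable_integrable)
  then have "(\<lambda>\<xi>. cis (2 * pi * (x \<bullet> \<xi>)) * g \<xi>) \<in> borel_measurable borel"
    by measurable
  then have "inv_fourier g x = integral\<^sup>L lborel (\<lambda>\<xi>. cis (2 * pi * (x \<bullet> (\<xi> + v))) * g (\<xi> + v))"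
    unfolding inv_fourier_def by (rule integral_lborel_translate[symmetric])
  also have "\<dots> = integral\<^sup>L lborel (\<lambda>\<xi>. cis (2 * pi * (x \<bullet> v)) * (cis (2 * pi * (x \<bullet> \<xi>)) * g (\<xi> + v)))"
    by (rule Bochner_Integration.integral_cong)
      (auto simp: inner_add_right distrib_left cis_mult[symmetric] add.commute mult.assoc)
  also have "\<dots> = cis (2 * pi * (x \<bullet> v)) * inv_fourier (\<lambda>\<xi>. g (\<xi> + v)) x"
    unfolding inv_fourier_def by simp
  finally have "cis (- (2 * pi * (x \<bullet> v))) * inv_fourier g x =
      (cis (- (2 * pi * (x \<bullet> v))) * cis (2 * pi * (x \<bullet> v))) * inv_fourier (\<lambda>\<xi>. g (\<xi> + v)) x"
    by (simp add: mult.assoc)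
  then show ?thesis by (simp add: cis_mult)
qed

lemma inv_fourier_forward_diff:
  fixes g :: "real^'n::finite \<Rightarrow> complex"
  assumes "integrable lborel g"
  shows "integrable lborel (forward_diff v p g) \<and>
    inv_fourier (forward_diff v p g) x = (cis (- (2 * pi * (x \<bullet> v))) - 1) ^ p * inv_fourier g x"
  using assms
proof (induction p arbitrary: g)
  case (Suc p)
  have shift: "integrable lborel (\<lambda>\<xi>. g (\<xi> + v))"
    by (rule integrable_lborel_translate[OF Suc.prems])
  have "inv_fourier (\<lambda>\<xi>. g (\<xi> + v) - g \<xi>) x = inv_fourier (\<lambda>\<xi>. g (\<xi> + v)) x - inv_fourier g x"
    unfolding inv_fourier_def right_diff_distrib
    by (rule Bochner_Integration.integral_diff) (intro integrable_cis_mult shift Suc.prems)+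
  also have "\<dots> = (cis (- (2 * pi * (x \<bullet> v))) - 1) * inv_fourier g x"
    by (simp add: inv_fourier_translate[OF Suc.prems] algebra_simps)
  finally show ?case
    using Suc.IH[of "\<lambda>\<xi>. g (\<xi> + v) - g \<xi>"] shift Suc.prems by (simp add: mult_ac)
qed simp

lemma norm_inv_fourier_le_integral:
  assumes "integrable lborel V" and "\<And>\<xi>. norm (g \<xi>) \<le> V \<xi>"
  shows "norm (inv_fourier g x) \<le> integral\<^sup>L lborel V"
proof -
  have "norm (inv_fourier g x) \<le> integral\<^sup>L lborel (\<lambda>\<xi>. norm (g \<xi>))"
    using integral_norm_bound[of lborel "\<lambda>\<xi>. cis (2 * pi * (x \<bullet> \<xi>)) * g \<xi>"]
    by (simp add: inv_fourier_def norm_mult)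
  also have "\<dots> \<le> integral\<^sup>L lborel V"
    using assms by (intro integral_mono') (auto intro: order_trans[OF norm_ge_zero])
  finally show ?thesis .
qed

lemma sin_ge_half:
  assumes "0 \<le> x" "x \<le> pi / 3"
  shows "x / 2 \<le> sin x"
proof -
  have "sin 0 - 0 / 2 \<le> sin x - x / 2"
  proof (rule DERIV_nonneg_imp_nondecreasing[OF assms(1)])
    fix z assume z: "0 \<le> z" "z \<le> x"
    have "cos (pi / 3) \<le> cos z"
      using z assms by (intro cos_monotone_0_pi_le) auto
    then have "1 / 2 \<le> cos z" by (simp add: cos_60)
    moreover have "((\<lambda>y. sin y - y / 2) has_real_derivative (cos z - 1 / 2)) (at z)"
      by (auto intro!: derivative_eq_intros)
    ultimately show "\<exists>d. ((\<lambda>y. sin y - y / 2) has_real_derivative d) (at z) \<and> d \<ge> 0"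
      by force
  qed
  then show ?thesis by simp
qed

lemma norm_cis_minus_one_ge:
  assumes "p \<ge> 1"
  shows "1 / (2 * real p) \<le> norm (cis (- (pi / (3 * real p))) - 1)"
proof -
  let ?x = "pi / (3 * real p)"
  have x: "0 \<le> ?x" "?x \<le> pi / 3" using assms by (simp_all add: divide_simps)
  have "1 / (2 * real p) \<le> ?x / 2" using assms pi_gt3 by (simp add: divide_simps)
  also have "\<dots> \<le> sin ?x" by (rule sin_ge_half[OF x])
  also have "\<dots> = \<bar>Im (cis (- ?x) - 1)\<bar>"
    using sin_ge_zero[of ?x] x pi_gt_zero by simp
  also have "\<dots> \<le> norm (cis (- ?x) - 1)" by (rule abs_Im_le_cmod)
  finally show ?thesis .
qed

section \<open>An integrable majorant\<close>

definition lorentzian :: "real \<Rightarrow> real" where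
  "lorentzian t = 1 / (1 + t\<^sup>2)"

definition lorentzian_prod :: "real^'n::finite \<Rightarrow> real" where
  "lorentzian_prod \<zeta> = (\<Prod>j\<in>UNIV. lorentzian (\<zeta> $ j))"

lemma lorentzian_pos: "lorentzian t > 0"
  by (simp add: lorentzian_def add_pos_nonneg)

lemma continuous_on_lorentzian: "continuous_on UNIV lorentzian"
  unfolding lorentzian_def by (intro continuous_intros) (metis add_pos_nonneg zero_le_power2 zero_less_one less_irrefl)

lemma borel_measurable_lorentzian [measurable]: "lorentzian \<in> borel_measurable borel"
  by (intro borel_measurable_continuous_onI continuous_on_lorentzian)

lemma nn_integral_lorentzian_nonneg:
  "(\<integral>\<^sup>+t. ennreal (lorentzian t) * indicator {0..} t \<partial>lborel) = ennreal (pi / 2)"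
proof (subst nn_integral_FTC_atLeast[where F = arctan])
  show "(arctan \<longlongrightarrow> pi / 2) at_top" by (rule tendsto_arctan_at_top)
  show "(arctan has_real_derivative lorentzian x) (at x)" for x
    unfolding lorentzian_def by (auto intro!: derivative_eq_intros simp: power2_eq_square divide_inverse)
qed (auto simp: lorentzian_def add_pos_nonneg less_imp_le)

lemma nn_integral_lorentzian_finite: "(\<integral>\<^sup>+t. ennreal (lorentzian t) \<partial>lborel) < \<infinity>"
proof -
  let ?g = "\<lambda>t. ennreal (lorentzian t) * indicator {0..} t"
  have "(\<integral>\<^sup>+t. ennreal (lorentzian t) \<partial>lborel) \<le> (\<integral>\<^sup>+t. ?g t + ?g (0 + (-1) * t) \<partial>lborel)"
    by (intro nn_integral_mono) (auto simp: lorentzian_def split: split_indicator)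
  also have "\<dots> = (\<integral>\<^sup>+t. ?g t \<partial>lborel) + (\<integral>\<^sup>+t. ?g (0 + (-1) * t) \<partial>lborel)"
    by (rule nn_integral_add) auto
  also have "(\<integral>\<^sup>+t. ?g (0 + (-1) * t) \<partial>lborel) = (\<integral>\<^sup>+t. ?g t \<partial>lborel)"
    using nn_integral_real_affine[of ?g "-1" 0] by simp
  also have "(\<integral>\<^sup>+t. ?g t \<partial>lborel) + (\<integral>\<^sup>+t. ?g t \<partial>lborel) < \<infinity>"
    by (simp add: nn_integral_lorentzian_nonneg ennreal_plus[symmetric] del: ennreal_plus)
  finally show ?thesis .
qed

lemma lorentzian_prod_pos: "lorentzian_prod \<zeta> > 0"
  unfolding lorentzian_prod_def by (intro prod_pos) (simp add: lorentzian_pos)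

lemma borel_measurable_lorentzian_prod [measurable]:
  "(lorentzian_prod :: real^'n::finite \<Rightarrow> real) \<in> borel_measurable borel"
  unfolding lorentzian_prod_def lorentzian_def
  by (intro borel_measurable_continuous_onI continuous_intros) (metis add_pos_nonneg zero_le_power2 zero_less_one less_irrefl)

lemma lorentzian_prod_eq_prod_Basis:
  "lorentzian_prod \<zeta> = (\<Prod>b\<in>(Basis :: (real^'n::finite) set). lorentzian (\<zeta> \<bullet> b))"
proof -
  have Basis: "(Basis :: (real^'n) set) = range (\<lambda>i. axis i 1)"
    by (auto simp: Basis_vec_def)
  have "inj (\<lambda>i::'n. axis i (1::real))"
    by (auto simp: inj_on_def axis_eq_axis)
  then show ?thesis
    unfolding Basis lorentzian_prod_def by (subst prod.reindex) (simp_all add: inner_axis)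
qed

lemma integrable_lorentzian_prod: "integrable lborel (lorentzian_prod :: real^'n::finite \<Rightarrow> real)"
proof (rule integrableI_bounded)
  have "(\<integral>\<^sup>+x. ennreal (norm (lorentzian_prod (x::real^'n))) \<partial>lborel) =
      (\<integral>\<^sup>+x. (\<Prod>b\<in>(Basis :: (real^'n) set). ennreal (lorentzian (x \<bullet> b))) \<partial>lborel)"
  proof (intro nn_integral_cong)
    fix x :: "real^'n"
    have "norm (lorentzian_prod x) = lorentzian_prod x" using lorentzian_prod_pos[of x] by simp
    then show "ennreal (norm (lorentzian_prod x)) = (\<Prod>b\<in>Basis. ennreal (lorentzian (x \<bullet> b)))"
      by (simp add: lorentzian_prod_eq_prod_Basis prod_ennreal lorentzian_pos less_imp_le)
  qed
  also have "\<dots> = (\<Prod>b\<in>(Basis :: (real^'n) set). (\<integral>\<^sup>+t. ennreal (lorentzian t) \<partial>lborel))"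
    by (rule nn_integral_lborel_prod) auto
  also have "\<dots> < \<infinity>"
    using nn_integral_lorentzian_finite by (simp add: prod_constant less_top[symmetric] power_eq_top_ennreal)
  finally show "(\<integral>\<^sup>+x. ennreal (norm (lorentzian_prod (x::real^'n))) \<partial>lborel) < \<infinity>" .
qed simp

lemma inverse_power_le_lorentzian_prod:
  "1 / (1 + (norm \<zeta>)\<^sup>2) ^ CARD('n) \<le> lorentzian_prod (\<zeta> :: real^'n::finite)"
proof -
  have "(\<Prod>j\<in>UNIV. 1 + (\<zeta> $ j)\<^sup>2) \<le> (\<Prod>j\<in>(UNIV::'n set). 1 + (norm \<zeta>)\<^sup>2)"
  proof (rule prod_mono)
    fix j
    have "(\<zeta> $ j)\<^sup>2 \<le> (norm \<zeta>)\<^sup>2"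
      using component_le_norm_cart[of \<zeta> j] by (metis abs_le_square_iff abs_norm_cancel)
    then show "0 \<le> 1 + (\<zeta> $ j)\<^sup>2 \<and> 1 + (\<zeta> $ j)\<^sup>2 \<le> 1 + (norm \<zeta>)\<^sup>2" by simp
  qed
  moreover have "lorentzian_prod \<zeta> = 1 / (\<Prod>j\<in>UNIV. 1 + (\<zeta> $ j)\<^sup>2)"
    unfolding lorentzian_prod_def lorentzian_def by (simp add: prod_dividef)
  moreover have "(\<Prod>j\<in>UNIV. 1 + (\<zeta> $ j)\<^sup>2) > 0"
    by (intro prod_pos) (simp add: add_pos_nonneg)
  ultimately show ?thesis by (simp add: frac_le)
qed


lemma exp_neg_assoc_fn_mult_power_le:
  assumes "weight_seq W" and "\<rho> \<ge> 0"
  shows "exp (- assoc_fn W \<rho>) * \<rho> ^ p \<le> W p"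
proof -
  have "\<rho> ^ p \<le> exp (assoc_fn W \<rho>) * W p"
    using power_div_le_exp_assoc_fn[OF assms, of p] weight_seq_pos[OF assms(1), of p]
    by (simp add: pos_divide_le_eq)
  then show ?thesis by (simp add: exp_minus field_simps)
qed

lemma exp_neg_assoc_fn_le_lorentzian_prod:
  assumes W: "weight_seq W" and "c > 0"
  obtains K where "K \<ge> 0" and "\<And>\<zeta>::real^'n::finite. exp (- assoc_fn W (c * norm \<zeta>)) \<le> K * lorentzian_prod \<zeta>"
proof (rule that)
  let ?N = "CARD('n)"
  let ?K = "2 ^ ?N * (1 + W (2 * ?N) / c ^ (2 * ?N))"
  show K: "?K \<ge> 0" using weight_seq_pos[OF W, of "2 * ?N"] \<open>c > 0\<close> by simp
  fix \<zeta> :: "real^'n"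
  define r where "r = norm \<zeta>"
  define e where "e = exp (- assoc_fn W (c * r))"
  have "(1 + r\<^sup>2) ^ ?N \<le> (2 * max 1 (r\<^sup>2)) ^ ?N"
    by (rule power_mono) auto
  also have "\<dots> = 2 ^ ?N * max 1 (r\<^sup>2) ^ ?N"
    by (rule power_mult_distrib)
  also have "\<dots> \<le> 2 ^ ?N * (1 + r ^ (2 * ?N))"
    by (intro mult_left_mono; cases "r\<^sup>2 \<le> 1") (simp_all add: max_def power_mult)
  finally have poly: "(1 + r\<^sup>2) ^ ?N \<le> 2 ^ ?N * (1 + r ^ (2 * ?N))" .
  have tail: "e * r ^ (2 * ?N) \<le> W (2 * ?N) / c ^ (2 * ?N)"
    using exp_neg_assoc_fn_mult_power_le[OF W, of "c * r" "2 * ?N"] \<open>c > 0\<close>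
    by (simp add: e_def r_def power_mult_distrib pos_le_divide_eq mult_ac)
  have e: "e \<le> 1" "e \<ge> 0" using assoc_fn_nonneg[OF W] by (simp_all add: e_def)
  have "e * (1 + r\<^sup>2) ^ ?N \<le> e * (2 ^ ?N * (1 + r ^ (2 * ?N)))"
    using poly e by (intro mult_left_mono)
  also have "\<dots> = 2 ^ ?N * (e + e * r ^ (2 * ?N))"
    by (simp add: algebra_simps)
  also have "\<dots> \<le> ?K"
    using e tail by (intro mult_left_mono add_mono) auto
  finally have "e \<le> ?K * (1 / (1 + r\<^sup>2) ^ ?N)"
    by (simp add: pos_le_divide_eq add_pos_nonneg mult.commute)
  also have "\<dots> \<le> ?K * lorentzian_prod \<zeta>"
    using K unfolding r_def by (intro mult_left_mono inverse_power_le_lorentzian_prod)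
  finally show "exp (- assoc_fn W (c * norm \<zeta>)) \<le> ?K * lorentzian_prod \<zeta>"
    by (simp add: e_def r_def)
qed

section \<open>Weighted derivative bounds\<close>

text \<open>The seminorm bound of \<open>S^{W,h}_{A,h}\<close> with the decay centred at \<open>c\<close>: \<open>in_S_h\<close> is the
  case \<open>c = 0\<close>, and condition (1) of a UCPU is this bound at \<open>c = y l\<close>, uniformly in \<open>l\<close>.\<close>

definition S_bounded :: "(nat \<Rightarrow> real) \<Rightarrow> (nat \<Rightarrow> real) \<Rightarrow> real \<Rightarrow> real^'n::finite \<Rightarrow> real \<Rightarrow>
    (real^'n \<Rightarrow> complex) \<Rightarrow> bool" where
  "S_bounded W A h c B \<phi> \<longleftrightarrow> (\<forall>\<alpha> x.
     h ^ mlen \<alpha> * norm (mderiv \<alpha> \<phi> x) * exp (assoc_fn A (h * norm (x - c))) / W (mlen \<alpha>) \<le> B)"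

lemma in_S_S_bounded:
  "in_S b M A \<phi> \<Longrightarrow>
     (if b then \<forall>h>0. \<exists>B. S_bounded M A h 0 B \<phi> else \<exists>h>0. \<exists>B. S_bounded M A h 0 B \<phi>)"
  by (cases b) (auto simp: in_S_def in_S_h_def S_bounded_def)

lemma in_S_imp_smooth_fn: "in_S b M A \<phi> \<Longrightarrow> smooth_fn \<phi>"
  unfolding in_S_def in_S_h_def by (cases b) (auto dest: spec[of _ 1])

lemma UCPU_S_bounded:
  "UCPU b M A \<Lambda> psi y \<Longrightarrow>
     (if b then \<forall>h>0. \<exists>B. \<forall>l\<in>\<Lambda>. S_bounded M A h (y l) B (psi l)
      else \<exists>h>0. \<exists>B. \<forall>l\<in>\<Lambda>. S_bounded M A h (y l) B (psi l))"
  by (simp add: UCPU_def S_bounded_def Let_def)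

lemma UCPU_imp_smooth_fn: "UCPU b M A \<Lambda> psi y \<Longrightarrow> l \<in> \<Lambda> \<Longrightarrow> smooth_fn (psi l)"
  unfolding UCPU_def by (blast intro: in_S_imp_smooth_fn)

lemma S_bounded_mono:
  assumes W: "weight_seq W" and A: "weight_seq A" and "0 \<le> h'" "h' \<le> h"
    and "S_bounded W A h c B \<phi>"
  shows "S_bounded W A h' c B \<phi>"
  unfolding S_bounded_def
proof (intro allI)
  fix \<alpha> x
  have "h' ^ mlen \<alpha> * norm (mderiv \<alpha> \<phi> x) * exp (assoc_fn A (h' * norm (x - c)))
      \<le> h ^ mlen \<alpha> * norm (mderiv \<alpha> \<phi> x) * exp (assoc_fn A (h * norm (x - c)))"
    using assms by (intro mult_mono power_mono assoc_fn_mono[OF A, THEN exp_mono]) (auto intro: mult_right_mono)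
  then show "h' ^ mlen \<alpha> * norm (mderiv \<alpha> \<phi> x) * exp (assoc_fn A (h' * norm (x - c))) / W (mlen \<alpha>) \<le> B"
    using assms(5) weight_seq_pos[OF W, of "mlen \<alpha>"] unfolding S_bounded_def
    by (meson divide_right_mono less_imp_le order_trans)
qed

lemma enum_list_distinct_UNIV: "distinct (enum_list :: 'n::finite list) \<and> set (enum_list :: 'n list) = UNIV"
proof -
  have "\<exists>xs :: 'n list. distinct xs \<and> set xs = UNIV"
    using finite_distinct_list[of "UNIV :: 'n set"] by auto
  then show ?thesis unfolding enum_list_def by (rule someI_ex)
qed

lemma mderiv_single_index: "mderiv (\<lambda>i::'n::finite. if i = j then k else 0) f = dlist (replicate k j) f"
proof -
  have "concat (map (\<lambda>i. replicate (if i = j then k else 0) i) xs) = (if j \<in> set xs then replicate k j else [])"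
    if "distinct xs" for xs :: "'n list"
    using that by (induction xs) auto
  then show ?thesis unfolding mderiv_def using enum_list_distinct_UNIV[where 'n = 'n] by simp
qed

lemma mlen_single_index: "mlen (\<lambda>i::'n::finite. if i = j then k else 0) = k"
  unfolding mlen_def by simp

lemma S_bounded_imp_nonneg:
  assumes "weight_seq W" and "S_bounded W A h c B \<phi>"
  shows "B \<ge> 0"
proof -
  have "0 \<le> h ^ mlen (\<lambda>_. 0::nat) * norm (mderiv (\<lambda>_::'a. 0) \<phi> x) * exp (assoc_fn A (h * norm (x - c))) / W (mlen (\<lambda>_::'a. 0))"
    for x :: "real^'a"
    using assms(1) by (simp add: mlen_def weight_seq_0)
  with assms(2) show ?thesis unfolding S_bounded_def by (meson order_trans)
qed

lemma norm_dlist_replicate_le_of_S_bounded: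
  assumes W: "weight_seq W" and "h > 0" and "S_bounded W A h c B \<phi>"
  shows "norm (dlist (replicate k j) \<phi> \<xi>) \<le> B * W k / h ^ k * exp (- assoc_fn A (h * norm (\<xi> - c)))"
proof -
  have "h ^ k * norm (dlist (replicate k j) \<phi> \<xi>) * exp (assoc_fn A (h * norm (\<xi> - c))) / W k \<le> B"
    using assms(3) unfolding S_bounded_def
    by (metis mderiv_single_index mlen_single_index)
  then show ?thesis
    using weight_seq_pos[OF W, of k] \<open>h > 0\<close> by (simp add: exp_minus field_simps)
qed

text \<open>The shift \<open>|t| \<le> 1\<close> costs a factor \<open>exp (A h)\<close> per factor, and (M.2) for \<open>A\<close> turns
  the two decays into decay in \<open>|c - x|\<close> times an integrable function of \<open>\<xi>\<close>.\<close>

lemma norm_dlist_replicate_mult_transl_le: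
  fixes psi chi :: "real^'n::finite \<Rightarrow> complex"
  assumes M: "weight_seq M" and A: "weight_seq A" and "h > 0" and A2: "assoc_M2 A c0 H"
    and KA: "KA \<ge> 0" "\<And>\<zeta>::real^'n. exp (- assoc_fn A (h / (2 * H) * norm \<zeta>)) \<le> KA * lorentzian_prod \<zeta>"
    and psi: "smooth_fn psi" "S_bounded M A h c Bpsi psi"
    and chi: "smooth_fn chi" "S_bounded M A h 0 Bchi chi"
    and t: "\<bar>t\<bar> \<le> 1"
  shows "norm (dlist (replicate k j) (\<lambda>\<xi>. psi \<xi> * transl x chi \<xi>) (\<xi> + t *\<^sub>R axis j 1))
    \<le> (Bpsi * Bchi * exp (2 * assoc_fn A h) * c0\<^sup>2 * KA * exp (- assoc_fn A (h / (4 * H) * norm (c - x))))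
       * M k / (h / 2) ^ k * lorentzian_prod (\<xi> - x)"
proof -
  let ?z = "\<xi> + t *\<^sub>R axis j 1"
  let ?ea = "exp (- assoc_fn A (h * norm (?z - c)))" and ?eb = "exp (- assoc_fn A (h * norm (?z - x)))"
  have H: "H \<ge> 1" and c0: "c0 \<ge> 1" using A2 by (auto simp: assoc_M2_def)
  have B: "Bpsi \<ge> 0" "Bchi \<ge> 0" using psi(2) chi(2) by (auto intro: S_bounded_imp_nonneg[OF M])
  have "?ea * ?eb \<le> (exp (assoc_fn A h) * exp (- assoc_fn A (h / 2 * norm (\<xi> - c)))) *
                          (exp (assoc_fn A h) * exp (- assoc_fn A (h / 2 * norm (\<xi> - x))))"
    using exp_neg_assoc_fn_shift_le[OF A, of "h / 2" "?z - c" "\<xi> - c" 1]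
      exp_neg_assoc_fn_shift_le[OF A, of "h / 2" "?z - x" "\<xi> - x" 1] \<open>h > 0\<close> t
    by (intro mult_mono) auto
  also have "\<dots> = exp (2 * assoc_fn A h) *
      (exp (- assoc_fn A (H * (h / (2 * H)) * norm (\<xi> - c))) * exp (- assoc_fn A (H * (h / (2 * H)) * norm (\<xi> - x))))"
    using H by (simp add: exp_add[symmetric] mult_ac)
  also have "\<dots> \<le> exp (2 * assoc_fn A h) *
      (c0\<^sup>2 * exp (- assoc_fn A (h / (4 * H) * norm (c - x))) * exp (- assoc_fn A (h / (2 * H) * norm (\<xi> - x))))"
    using exp_neg_assoc_fn_mult_split[OF A A2, of "h / (2 * H)"] \<open>h > 0\<close> H
    by (intro mult_left_mono) (auto simp: field_simps)
  also have "\<dots> \<le> exp (2 * assoc_fn A h) * (c0\<^sup>2 * exp (- assoc_fn A (h / (4 * H) * norm (c - x))) * (KA * lorentzian_prod (\<xi> - x)))"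
    using KA(2)[of "\<xi> - x"] by (intro mult_left_mono) auto
  finally have decay: "?ea * ?eb \<le> exp (2 * assoc_fn A h) *
      (c0\<^sup>2 * exp (- assoc_fn A (h / (4 * H) * norm (c - x))) * (KA * lorentzian_prod (\<xi> - x)))" .
  have "norm (dlist (replicate k j) (\<lambda>\<xi>. psi \<xi> * transl x chi \<xi>) ?z) \<le> Bpsi * Bchi * 2 ^ k * M k / h ^ k * (?ea * ?eb)"
  proof (rule norm_dlist_replicate_mult_le[OF M \<open>h > 0\<close>])
    show "norm (dlist (replicate i j) (transl x chi) ?z) \<le> Bchi * M i / h ^ i * ?eb" for i
      using norm_dlist_replicate_le_of_S_bounded[OF M \<open>h > 0\<close> chi(2), of i j "?z - x"]
      by (simp only: dlist_transl) (simp add: transl_def)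
  qed (use norm_dlist_replicate_le_of_S_bounded[OF M \<open>h > 0\<close> psi(2)] B psi(1) chi(1)
      in \<open>auto intro: smooth_fn_imp_smooth_along smooth_along_transl\<close>)
  also have "\<dots> \<le> Bpsi * Bchi * 2 ^ k * M k / h ^ k * (exp (2 * assoc_fn A h) *
      (c0\<^sup>2 * exp (- assoc_fn A (h / (4 * H) * norm (c - x))) * (KA * lorentzian_prod (\<xi> - x))))"
    using B \<open>h > 0\<close> weight_seq_pos[OF M, of k] by (intro mult_left_mono[OF decay]) auto
  finally show ?thesis
    by (simp add: power_divide mult_ac)
qed

lemma norm_forward_diff_axis_le:
  assumes "smooth_along j g"
    and "\<And>t. \<bar>t\<bar> \<le> real p * \<bar>s\<bar> \<Longrightarrow> norm (dlist (replicate p j) g (\<xi> + t *\<^sub>R axis j 1)) \<le> B"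
  shows "norm (forward_diff (s *\<^sub>R axis j 1) p g \<xi>) \<le> \<bar>s\<bar> ^ p * B"
proof -
  let ?\<phi> = "\<lambda>k t. dlist (replicate k j) g (\<xi> + t *\<^sub>R axis j 1)"
  have "forward_diff (s *\<^sub>R axis j 1) p g \<xi> = forward_diff s p (?\<phi> 0) 0"
    using forward_diff_along_axis[of s j p g \<xi> 0] by simp
  also have "norm \<dots> \<le> \<bar>s\<bar> ^ p * B"
    using assms by (intro norm_forward_diff_le smooth_along_has_vector_derivative) auto
  finally show ?thesis .
qed

text \<open>The \<open>p\<close>-th forward difference along \<open>e\<^sub>j\<close> with step \<open>s = 1 / (6 p x\<^sub>j)\<close> multiplies
  the inverse Fourier transform at \<open>x\<close> by \<open>(cis (- pi / (3 p)) - 1) ^ p\<close>, of modulus at least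
  \<open>(2 p) ^ - p\<close>, while it is bounded by \<open>|s| ^ p\<close> times the \<open>p\<close>-th derivative.\<close>

lemma norm_inv_fourier_le_coordinate:
  fixes g :: "real^'n::finite \<Rightarrow> complex"
  assumes W: "weight_seq W" and "h > 0"
    and g: "smooth_along j g" "integrable lborel g"
    and P: "integrable lborel P" "\<And>\<xi>. P \<xi> \<ge> 0" and "Q \<ge> 0"
    and bound: "\<And>k \<xi> t. \<bar>t\<bar> \<le> 1 \<Longrightarrow>
      norm (dlist (replicate k j) g (\<xi> + t *\<^sub>R axis j 1)) \<le> Q * W k / h ^ k * P \<xi>"
    and "1 \<le> \<bar>x $ j\<bar>"
  shows "norm (inv_fourier g x) \<le> Q * integral\<^sup>L lborel P * W p / (3 * h * \<bar>x $ j\<bar>) ^ p"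
proof (cases "p = 0")
  case True
  have "norm (inv_fourier g x) \<le> integral\<^sup>L lborel (\<lambda>\<xi>. Q * P \<xi>)"
    using P bound[where k = 0 and t = 0] by (intro norm_inv_fourier_le_integral) (auto simp: weight_seq_0[OF W])
  then show ?thesis using True weight_seq_0[OF W] by simp
next
  case False
  define r where "r = x $ j"
  define s where "s = 1 / (6 * real p * r)"
  have r: "1 \<le> \<bar>r\<bar>" and p: "1 \<le> p" using \<open>1 \<le> \<bar>x $ j\<bar>\<close> False by (auto simp: r_def)
  have ps: "real p * \<bar>s\<bar> \<le> 1" using r p by (simp add: s_def abs_mult field_simps)
  have angle: "2 * pi * (x \<bullet> (s *\<^sub>R axis j 1)) = pi / (3 * real p)"
    using r p by (simp add: s_def r_def inner_axis field_simps)
  let ?V = "\<lambda>\<xi>. \<bar>s\<bar> ^ p * (Q * W p / h ^ p * P \<xi>)"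
  have "(1 / (2 * real p)) ^ p * norm (inv_fourier g x)
      \<le> norm (cis (- (pi / (3 * real p))) - 1) ^ p * norm (inv_fourier g x)"
    using norm_cis_minus_one_ge[OF p] p by (intro mult_right_mono power_mono) auto
  also have "\<dots> = norm (inv_fourier (forward_diff (s *\<^sub>R axis j 1) p g) x)"
    using inv_fourier_forward_diff[OF g(2), of "s *\<^sub>R axis j 1" p x, unfolded angle]
    by (simp add: norm_mult norm_power)
  also have "\<dots> \<le> integral\<^sup>L lborel ?V"
  proof (rule norm_inv_fourier_le_integral)
    show "integrable lborel ?V" using P(1) by simp
    show "norm (forward_diff (s *\<^sub>R axis j 1) p g \<xi>) \<le> ?V \<xi>" for \<xi>
      using ps by (intro norm_forward_diff_axis_le[OF g(1)] bound) auto
  qed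
  also have "\<dots> = \<bar>s\<bar> ^ p * (Q * W p / h ^ p) * integral\<^sup>L lborel P"
    by simp
  finally have "norm (inv_fourier g x) \<le> (2 * real p * \<bar>s\<bar>) ^ p * (Q * W p / h ^ p) * integral\<^sup>L lborel P"
    using p by (simp add: power_mult_distrib field_simps)
  also have "2 * real p * \<bar>s\<bar> = 1 / (3 * \<bar>r\<bar>)"
    using p r by (simp add: s_def abs_mult field_simps)
  finally show ?thesis
    using \<open>h > 0\<close> r by (simp add: r_def power_divide power_mult_distrib field_simps)
qed

lemma norm_le_card_mult_max_component:
  fixes x :: "real^'n::finite"
  obtains j where "norm x \<le> real CARD('n) * \<bar>x $ j\<bar>"
proof -
  have "Max (range (\<lambda>i. \<bar>x $ i\<bar>)) \<in> range (\<lambda>i. \<bar>x $ i\<bar>)"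
    by (intro Max_in) auto
  then obtain j where j: "Max (range (\<lambda>i. \<bar>x $ i\<bar>)) = \<bar>x $ j\<bar>"
    by blast
  have "norm x \<le> (\<Sum>i\<in>UNIV. \<bar>x $ i\<bar>)" by (rule norm_le_l1_cart)
  also have "\<dots> \<le> real CARD('n) * \<bar>x $ j\<bar>"
    by (rule sum_bounded_above) (auto simp flip: j intro: Max_ge)
  finally show ?thesis by (rule that)
qed

lemma norm_inv_fourier_le_exp_neg_assoc_fn:
  fixes g :: "real^'n::finite \<Rightarrow> complex"
  assumes W: "weight_seq W" and "h > 0"
    and g: "\<And>j. smooth_along j g" "g \<in> borel_measurable lborel"
    and P: "integrable lborel P" "\<And>\<xi>. P \<xi> \<ge> 0" and "Q \<ge> 0"
    and bound: "\<And>j k \<xi> t. \<bar>t\<bar> \<le> 1 \<Longrightarrow>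
      norm (dlist (replicate k j) g (\<xi> + t *\<^sub>R axis j 1)) \<le> Q * W k / h ^ k * P \<xi>"
  shows "norm (inv_fourier g x) \<le>
    Q * integral\<^sup>L lborel P * exp (assoc_fn W (3 * h)) * exp (- assoc_fn W (3 * h * norm x / CARD('n)))"
proof -
  let ?C = "Q * integral\<^sup>L lborel P" and ?r = "3 * h * norm x / CARD('n)"
  have C: "?C \<ge> 0" using P(2) \<open>Q \<ge> 0\<close> by (intro mult_nonneg_nonneg integral_nonneg) auto
  have bound0: "norm (g \<xi>) \<le> Q * P \<xi>" for \<xi>
    using bound[where k = 0 and t = 0 and \<xi> = \<xi>] by (simp add: weight_seq_0[OF W])
  have "integrable lborel g"
    using bound0 P \<open>Q \<ge> 0\<close>
    by (intro Bochner_Integration.integrable_bound[OF integrable_mult_right[OF P(1), of Q] g(2)] AE_I2)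
      (simp add: abs_of_nonneg)
  obtain j where "norm x \<le> real CARD('n) * \<bar>x $ j\<bar>"
    by (rule norm_le_card_mult_max_component)
  then have "?r \<le> 3 * h * \<bar>x $ j\<bar>"
    using \<open>h > 0\<close> by (simp add: field_simps)
  show ?thesis
  proof (cases "1 \<le> \<bar>x $ j\<bar>")
    case True
    have "norm (inv_fourier g x) \<le> ?C * exp (- assoc_fn W (3 * h * \<bar>x $ j\<bar>))"
      using \<open>h > 0\<close> norm_inv_fourier_le_coordinate[OF W \<open>h > 0\<close> g(1) \<open>integrable lborel g\<close> P \<open>Q \<ge> 0\<close> bound True]
      by (intro le_exp_neg_assoc_fn[OF W]) auto
    also have "\<dots> \<le> ?C * exp (- assoc_fn W ?r)"
      using \<open>?r \<le> 3 * h * \<bar>x $ j\<bar>\<close> \<open>h > 0\<close> C by (intro mult_left_mono) (auto intro: assoc_fn_mono[OF W])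
    also have "\<dots> \<le> ?C * exp (assoc_fn W (3 * h)) * exp (- assoc_fn W ?r)"
      using C assoc_fn_nonneg[OF W, of "3 * h"] by (intro mult_right_mono) (simp_all add: mult_le_cancel_left1)
    finally show ?thesis .
  next
    case False
    then have "?r \<le> 3 * h"
      using \<open>?r \<le> 3 * h * \<bar>x $ j\<bar>\<close> mult_left_le[of "\<bar>x $ j\<bar>" "3 * h"] \<open>h > 0\<close> by linarith
    then have "1 \<le> exp (assoc_fn W (3 * h)) * exp (- assoc_fn W ?r)"
      using \<open>h > 0\<close> assoc_fn_mono[OF W, of ?r "3 * h"] by (simp add: exp_add[symmetric])
    then have "?C * 1 \<le> ?C * (exp (assoc_fn W (3 * h)) * exp (- assoc_fn W ?r))"
      using C by (intro mult_left_mono)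
    moreover have "norm (inv_fourier g x) \<le> ?C"
      using norm_inv_fourier_le_integral[of "\<lambda>\<xi>. Q * P \<xi>" g x] P(1) bound0 by simp
    ultimately show ?thesis by (simp add: mult.assoc)
  qed
qed

section \<open>The localized \<open>FL^1_\<eta>\<close> estimate\<close>

lemma smooth_fn_imp_continuous: "smooth_fn f \<Longrightarrow> continuous_on UNIV f"
  unfolding smooth_fn_def by (metis dlist.simps(1))

lemma norm_inv_fourier_mult_transl_le:
  fixes psi chi :: "real^'n::finite \<Rightarrow> complex"
  assumes M: "weight_seq M" and A: "weight_seq A" and "h > 0" and A2: "assoc_M2 A c0 H"
    and KA: "KA \<ge> 0" "\<And>\<zeta>::real^'n. exp (- assoc_fn A (h / (2 * H) * norm \<zeta>)) \<le> KA * lorentzian_prod \<zeta>"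
    and psi: "smooth_fn psi" "S_bounded M A h c Bpsi psi"
    and chi: "smooth_fn chi" "S_bounded M A h 0 Bchi chi"
  shows "norm (inv_fourier (\<lambda>\<xi>. psi \<xi> * transl x chi \<xi>) x') \<le>
    (Bpsi * Bchi * exp (2 * assoc_fn A h) * c0\<^sup>2 * KA * exp (- assoc_fn A (h / (4 * H) * norm (c - x))))
    * integral\<^sup>L lborel (lorentzian_prod :: real^'n \<Rightarrow> real) * exp (assoc_fn M (3 * (h / 2)))
    * exp (- assoc_fn M (3 * (h / 2) * norm x' / CARD('n)))"
proof -
  define g where "g = (\<lambda>\<xi>. psi \<xi> * transl x chi \<xi>)"
  define Q where "Q = Bpsi * Bchi * exp (2 * assoc_fn A h) * c0\<^sup>2 * KA * exp (- assoc_fn A (h / (4 * H) * norm (c - x)))"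
  have "Q \<ge> 0"
    using KA S_bounded_imp_nonneg[OF M psi(2)] S_bounded_imp_nonneg[OF M chi(2)] by (simp add: Q_def)
  have "norm (inv_fourier g x') \<le> Q * integral\<^sup>L lborel (\<lambda>\<xi>. lorentzian_prod (\<xi> - x)) *
      exp (assoc_fn M (3 * (h / 2))) * exp (- assoc_fn M (3 * (h / 2) * norm x' / CARD('n)))"
  proof (rule norm_inv_fourier_le_exp_neg_assoc_fn[OF M])
    show "smooth_along j g" for j
      unfolding g_def using psi(1) chi(1)
      by (intro smooth_along_mult smooth_along_transl smooth_fn_imp_smooth_along)
    have "continuous_on UNIV g"
      unfolding g_def transl_def using psi(1) chi(1)
      by (intro continuous_intros continuous_on_compose2[OF smooth_fn_imp_continuous[OF chi(1)]]
          smooth_fn_imp_continuous) auto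
    then show "g \<in> borel_measurable lborel" by (simp add: borel_measurable_continuous_onI)
    show "integrable lborel (\<lambda>\<xi>. lorentzian_prod (\<xi> - x))"
      using integrable_lborel_translate[OF integrable_lorentzian_prod, of "- x"] by simp
    show "norm (dlist (replicate k j) g (\<xi> + t *\<^sub>R axis j 1)) \<le> Q * M k / (h / 2) ^ k * lorentzian_prod (\<xi> - x)"
      if "\<bar>t\<bar> \<le> 1" for j k \<xi> t
      using norm_dlist_replicate_mult_transl_le[OF M A \<open>h > 0\<close> A2 KA psi chi that]
      by (simp add: g_def Q_def mult_ac)
  qed (use \<open>h > 0\<close> \<open>Q \<ge> 0\<close> lorentzian_prod_pos less_imp_le in auto)
  also have "integral\<^sup>L lborel (\<lambda>\<xi>. lorentzian_prod (\<xi> - x)) = integral\<^sup>L lborel (lorentzian_prod :: real^'n \<Rightarrow> real)"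
    using integral_lborel_translate[of lorentzian_prod "- x"] by simp
  finally show ?thesis by (simp add: g_def Q_def)
qed

text \<open>By (M.2) for \<open>M\<close>, \<open>exp (- M (H \<tau> |z|)) \<le> c\<^sub>0 exp (- M (\<tau> |z|))\<^sup>2\<close>: one factor cancels the
  growth of the weight, the other is integrable.\<close>

lemma weight_mult_exp_neg_assoc_fn_le:
  fixes \<eta> :: "real^'n::finite \<Rightarrow> real"
  assumes M: "weight_seq M" and M2: "assoc_M2 M c0 H"
    and \<eta>: "\<And>z. 0 \<le> \<eta> z" "\<And>z. \<eta> z \<le> C\<eta> * exp (assoc_fn M (\<tau> * norm z))" and "\<tau> \<ge> 0"
    and KM: "\<And>\<zeta>::real^'n. exp (- assoc_fn M (\<tau> * norm \<zeta>)) \<le> KM * lorentzian_prod \<zeta>"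
    and r: "real CARD('n) * H * \<tau> \<le> r"
  shows "\<eta> z * exp (- assoc_fn M (r * norm z / CARD('n))) \<le> C\<eta> * c0 * KM * lorentzian_prod z"
proof -
  let ?e = "exp (- assoc_fn M (\<tau> * norm z))"
  have "H \<ge> 1" "c0 \<ge> 1" using M2 by (auto simp: assoc_M2_def)
  have "H * (\<tau> * norm z) = (real CARD('n) * H * \<tau>) * norm z / CARD('n)"
    by simp
  also have "\<dots> \<le> r * norm z / CARD('n)"
    by (intro divide_right_mono mult_right_mono r) auto
  finally have "assoc_fn M (H * (\<tau> * norm z)) \<le> assoc_fn M (r * norm z / CARD('n))"
    using \<open>H \<ge> 1\<close> \<open>\<tau> \<ge> 0\<close> by (intro assoc_fn_mono[OF M]) auto
  then have "exp (- assoc_fn M (r * norm z / CARD('n))) \<le> exp (- assoc_fn M (H * (\<tau> * norm z)))"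
    by simp
  also have "\<dots> \<le> c0 * ?e ^ 2"
    using M2 \<open>\<tau> \<ge> 0\<close> by (simp add: assoc_M2_def)
  finally have "\<eta> z * exp (- assoc_fn M (r * norm z / CARD('n))) \<le>
      (C\<eta> * exp (assoc_fn M (\<tau> * norm z))) * (c0 * ?e ^ 2)"
    using \<eta>[of z] by (intro mult_mono) auto
  also have "\<dots> = C\<eta> * c0 * ?e"
    by (simp add: power2_eq_square exp_minus field_simps)
  also have "\<dots> \<le> C\<eta> * c0 * (KM * lorentzian_prod z)"
  proof (rule mult_left_mono[OF KM])
    have "0 \<le> C\<eta> * exp (assoc_fn M (\<tau> * norm (0::real^'n)))"
      using \<eta>(1)[of 0] \<eta>(2)[of 0] by linarith
    then show "0 \<le> C\<eta> * c0" using \<open>c0 \<ge> 1\<close> by (simp add: zero_le_mult_iff)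
  qed
  finally show ?thesis by (simp add: mult_ac)
qed

lemma FL1_norm_le_lorentzian_prod:
  fixes \<eta> :: "real^'n::finite \<Rightarrow> real"
  assumes "D \<ge> 0" and "\<And>x. \<eta> x * norm (inv_fourier g x) \<le> D * lorentzian_prod x"
  shows "FL1_norm \<eta> g \<le> ennreal (D * integral\<^sup>L lborel (lorentzian_prod :: real^'n \<Rightarrow> real))"
proof -
  have "FL1_norm \<eta> g \<le> (\<integral>\<^sup>+x. ennreal (D * lorentzian_prod (x :: real^'n)) \<partial>lborel)"
    unfolding FL1_norm_def by (rule nn_integral_mono) (rule ennreal_leI[OF assms(2)])
  also have "\<dots> = ennreal (D * integral\<^sup>L lborel (lorentzian_prod :: real^'n \<Rightarrow> real))"
    using integrable_lorentzian_prod \<open>D \<ge> 0\<close>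
    by (subst nn_integral_eq_integral) (auto intro!: AE_I2 simp: lorentzian_prod_pos less_imp_le)
  finally show ?thesis .
qed

lemma FL1_norm_mult_transl_le:
  fixes chi :: "real^'n::finite \<Rightarrow> complex" and \<eta> :: "real^'n \<Rightarrow> real"
  assumes M: "weight_seq M" and A: "weight_seq A" and "h > 0"
    and A2: "assoc_M2 A c0A HA" and M2: "assoc_M2 M c0M HM"
    and \<eta>: "\<And>z. 0 \<le> \<eta> z" "\<And>z. \<eta> z \<le> C\<eta> * exp (assoc_fn M (\<tau> * norm z))"
    and "\<tau> > 0" and h\<tau>: "real CARD('n) * HM * \<tau> \<le> h"
    and chi: "smooth_fn chi" "S_bounded M A h 0 Bchi chi" and "Bpsi \<ge> 0"
  obtains D where "D \<ge> 0"
    and "\<And>psi c x. smooth_fn psi \<Longrightarrow> S_bounded M A h c Bpsi psi \<Longrightarrow>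
      FL1_norm \<eta> (\<lambda>\<xi>. psi \<xi> * transl x chi \<xi>) \<le> ennreal (D * exp (- assoc_fn A (h / (4 * HA) * norm (c - x))))"
proof -
  have "HA \<ge> 1" using A2 by (simp add: assoc_M2_def)
  obtain KA where KA: "KA \<ge> 0" "\<And>\<zeta>::real^'n. exp (- assoc_fn A (h / (2 * HA) * norm \<zeta>)) \<le> KA * lorentzian_prod \<zeta>"
    using exp_neg_assoc_fn_le_lorentzian_prod[OF A, of "h / (2 * HA)"] \<open>h > 0\<close> \<open>HA \<ge> 1\<close> by auto
  obtain KM where KM: "KM \<ge> 0" "\<And>\<zeta>::real^'n. exp (- assoc_fn M (\<tau> * norm \<zeta>)) \<le> KM * lorentzian_prod \<zeta>"
    using exp_neg_assoc_fn_le_lorentzian_prod[OF M \<open>\<tau> > 0\<close>] by auto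
  define IP where "IP = integral\<^sup>L lborel (lorentzian_prod :: real^'n \<Rightarrow> real)"
  have IP: "IP \<ge> 0"
    unfolding IP_def by (rule Bochner_Integration.integral_nonneg) (simp add: lorentzian_prod_pos less_imp_le)
  define Q where "Q = Bpsi * Bchi * exp (2 * assoc_fn A h) * c0A\<^sup>2 * KA * IP * exp (assoc_fn M (3 * (h / 2)))"
  have Q: "Q \<ge> 0"
    unfolding Q_def using KA IP S_bounded_imp_nonneg[OF M chi(2)] \<open>Bpsi \<ge> 0\<close> by simp
  have weight: "\<eta> z * exp (- assoc_fn M (3 * (h / 2) * norm z / CARD('n))) \<le> C\<eta> * c0M * KM * lorentzian_prod z" for z
    using h\<tau> \<open>h > 0\<close> \<open>\<tau> > 0\<close> by (intro weight_mult_exp_neg_assoc_fn_le[OF M M2 \<eta> _ KM(2)]) auto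
  have "0 \<le> (C\<eta> * c0M * KM) * lorentzian_prod (0::real^'n)"
    using order_trans[OF mult_nonneg_nonneg[OF \<eta>(1) exp_ge_zero] weight] by blast
  then have CKM: "C\<eta> * c0M * KM \<ge> 0"
    using lorentzian_prod_pos[of "0::real^'n"] by (simp add: zero_le_mult_iff)
  show ?thesis
  proof (rule that)
    show "C\<eta> * c0M * KM * Q * IP \<ge> 0" using CKM Q IP by simp
    fix psi :: "real^'n \<Rightarrow> complex" and c x
    assume psi: "smooth_fn psi" "S_bounded M A h c Bpsi psi"
    define Ex where "Ex = exp (- assoc_fn A (h / (4 * HA) * norm (c - x)))"
    have "\<eta> x' * norm (inv_fourier (\<lambda>\<xi>. psi \<xi> * transl x chi \<xi>) x') \<le> (C\<eta> * c0M * KM * Q * Ex) * lorentzian_prod x'"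
      for x'
    proof -
      have "\<eta> x' * norm (inv_fourier (\<lambda>\<xi>. psi \<xi> * transl x chi \<xi>) x')
          \<le> \<eta> x' * (Q * Ex * exp (- assoc_fn M (3 * (h / 2) * norm x' / CARD('n))))"
        using norm_inv_fourier_mult_transl_le[OF M A \<open>h > 0\<close> A2 KA psi chi, of x x'] \<eta>(1)[of x']
        by (intro mult_left_mono) (simp_all add: Q_def Ex_def IP_def mult_ac)
      also have "\<dots> = (Q * Ex) * (\<eta> x' * exp (- assoc_fn M (3 * (h / 2) * norm x' / CARD('n))))"
        by (simp only: mult_ac)
      also have "\<dots> \<le> (Q * Ex) * (C\<eta> * c0M * KM * lorentzian_prod x')"
        using Q by (intro mult_left_mono[OF weight]) (simp add: Ex_def)
      finally show ?thesis by (simp add: mult_ac)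
    qed
    then have "FL1_norm \<eta> (\<lambda>\<xi>. psi \<xi> * transl x chi \<xi>) \<le> ennreal ((C\<eta> * c0M * KM * Q * Ex) * IP)"
      unfolding IP_def using CKM Q by (intro FL1_norm_le_lorentzian_prod) (auto simp: Ex_def)
    then show "FL1_norm \<eta> (\<lambda>\<xi>. psi \<xi> * transl x chi \<xi>) \<le> ennreal (C\<eta> * c0M * KM * Q * IP * Ex)"
      by (simp add: mult_ac)
  qed
qed

definition FL1_decay_bound :: "(real^'n::finite \<Rightarrow> real) \<Rightarrow> (real^'n) set \<Rightarrow> 'l set \<Rightarrow>
    ('l \<Rightarrow> real^'n \<Rightarrow> complex) \<Rightarrow> ('l \<Rightarrow> real^'n) \<Rightarrow> (real^'n \<Rightarrow> complex) \<Rightarrow> (nat \<Rightarrow> real) \<Rightarrow> real \<Rightarrow> bool"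
  where
  "FL1_decay_bound \<eta> K \<Lambda> \<psi> y chi A h \<longleftrightarrow> (\<exists>C\<ge>1. \<forall>l\<in>\<Lambda>. \<forall>m\<in>\<Lambda>.
     (SUP x\<in>(+) (y m) ` K. FL1_norm \<eta> (\<lambda>\<xi>. \<psi> l \<xi> * transl x chi \<xi>))
       \<le> ennreal (C * exp (- assoc_fn A (h * norm (y l - y m)))))"

lemma FL1_decay_bound_mono:
  assumes A: "weight_seq A" and "0 \<le> h'" "h' \<le> h"
    and "FL1_decay_bound \<eta> K \<Lambda> \<psi> y chi A h"
  shows "FL1_decay_bound \<eta> K \<Lambda> \<psi> y chi A h'"
proof -
  obtain C where "C \<ge> 1" and C: "\<forall>l\<in>\<Lambda>. \<forall>m\<in>\<Lambda>.
      (SUP x\<in>(+) (y m) ` K. FL1_norm \<eta> (\<lambda>\<xi>. \<psi> l \<xi> * transl x chi \<xi>))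
        \<le> ennreal (C * exp (- assoc_fn A (h * norm (y l - y m))))"
    using assms(4) unfolding FL1_decay_bound_def by blast
  have "assoc_fn A (h' * norm (y l - y m)) \<le> assoc_fn A (h * norm (y l - y m))" for l m
    using assms by (intro assoc_fn_mono[OF A] mult_right_mono) auto
  then have "C * exp (- assoc_fn A (h * norm (y l - y m))) \<le> C * exp (- assoc_fn A (h' * norm (y l - y m)))" for l m
    using \<open>C \<ge> 1\<close> by (intro mult_left_mono) auto
  then show ?thesis
    unfolding FL1_decay_bound_def using \<open>C \<ge> 1\<close> C by (blast intro: order_trans ennreal_leI)
qed

text \<open>For \<open>x \<in> y\<^sub>m + K\<close> the distance \<open>|y\<^sub>\<lambda> - x|\<close> differs from \<open>|y\<^sub>\<lambda> - y\<^sub>m|\<close> by at most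
  the radius of \<open>K\<close>, which costs a factor \<open>2\<close> in the decay rate.\<close>

lemma FL1_decay_bound_of_S_bounded:
  fixes \<psi> :: "'l \<Rightarrow> real^'n::finite \<Rightarrow> complex" and \<eta> :: "real^'n \<Rightarrow> real"
  assumes M: "weight_seq M" and A: "weight_seq A" and "h > 0" and "bounded K"
    and A2: "assoc_M2 A c0A HA" and M2: "assoc_M2 M c0M HM"
    and \<eta>: "\<And>z. 0 \<le> \<eta> z" "\<And>z. \<eta> z \<le> C\<eta> * exp (assoc_fn M (\<tau> * norm z))"
    and "\<tau> > 0" and h\<tau>: "real CARD('n) * HM * \<tau> \<le> h"
    and chi: "smooth_fn chi" "S_bounded M A h 0 Bchi chi"
    and psi: "\<And>l. l \<in> \<Lambda> \<Longrightarrow> smooth_fn (\<psi> l)" "\<And>l. l \<in> \<Lambda> \<Longrightarrow> S_bounded M A h (y l) Bpsi (\<psi> l)"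
  shows "FL1_decay_bound \<eta> K \<Lambda> \<psi> y chi A (h / (8 * HA))"
proof (cases "\<Lambda> = {}")
  case True
  then show ?thesis unfolding FL1_decay_bound_def by auto
next
  case False
  then have "Bpsi \<ge> 0" using psi(2) S_bounded_imp_nonneg[OF M] by blast
  obtain D where "D \<ge> 0" and D: "\<And>psi c x. smooth_fn psi \<Longrightarrow> S_bounded M A h c Bpsi psi \<Longrightarrow>
      FL1_norm \<eta> (\<lambda>\<xi>. psi \<xi> * transl x chi \<xi>) \<le> ennreal (D * exp (- assoc_fn A (h / (4 * HA) * norm (c - x))))"
    using FL1_norm_mult_transl_le[OF M A \<open>h > 0\<close> A2 M2 \<eta> \<open>\<tau> > 0\<close> h\<tau> chi \<open>Bpsi \<ge> 0\<close>] by blast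
  obtain R where "R > 0" and R: "\<And>\<kappa>. \<kappa> \<in> K \<Longrightarrow> norm \<kappa> \<le> R"
    using \<open>bounded K\<close> by (auto simp: bounded_pos)
  have "HA \<ge> 1" using A2 by (simp add: assoc_M2_def)
  define h' where "h' = h / (8 * HA)"
  have "h' > 0" using \<open>h > 0\<close> \<open>HA \<ge> 1\<close> by (simp add: h'_def)
  define C where "C = max 1 (D * exp (assoc_fn A (2 * h' * R)))"
  show ?thesis
    unfolding FL1_decay_bound_def
  proof (intro exI[of _ C] conjI ballI SUP_least)
    show "C \<ge> 1" by (simp add: C_def)
    fix l m x assume l: "l \<in> \<Lambda>" and "m \<in> \<Lambda>" and "x \<in> (+) (y m) ` K"
    then obtain \<kappa> where "\<kappa> \<in> K" and x: "x = y m + \<kappa>" by auto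
    have "norm ((y l - x) - (y l - y m)) \<le> R" using R[OF \<open>\<kappa> \<in> K\<close>] by (simp add: x)
    then have "exp (- assoc_fn A (2 * h' * norm (y l - x))) \<le>
        exp (assoc_fn A (2 * h' * R)) * exp (- assoc_fn A (h' * norm (y l - y m)))"
      using \<open>h' > 0\<close> by (intro exp_neg_assoc_fn_shift_le[OF A]) auto
    then have "D * exp (- assoc_fn A (2 * h' * norm (y l - x))) \<le>
        (D * exp (assoc_fn A (2 * h' * R))) * exp (- assoc_fn A (h' * norm (y l - y m)))"
      using \<open>D \<ge> 0\<close> by (simp add: mult_left_mono mult.assoc)
    also have "\<dots> \<le> C * exp (- assoc_fn A (h' * norm (y l - y m)))"
      unfolding C_def by (intro mult_right_mono) auto
    finally have "D * exp (- assoc_fn A (h / (4 * HA) * norm (y l - x))) \<le> C * exp (- assoc_fn A (h' * norm (y l - y m)))"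
      by (simp add: h'_def)
    with D[OF psi(1)[OF l] psi(2)[OF l], of x]
    show "FL1_norm \<eta> (\<lambda>\<xi>. \<psi> l \<xi> * transl x chi \<xi>) \<le> ennreal (C * exp (- assoc_fn A (h / (8 * HA) * norm (y l - y m))))"
      unfolding h'_def by (blast intro: order_trans ennreal_leI)
  qed
qed

lemma FL1_decay_bound_Beurling:
  fixes \<psi> :: "'l \<Rightarrow> real^'n::finite \<Rightarrow> complex" and \<eta> :: "real^'n \<Rightarrow> real"
  assumes M: "weight_seq M" and A: "weight_seq A" and \<eta>: "weight_class True M \<eta>" and "compact K"
    and chi: "in_S True M A chi" and \<Psi>: "UCPU True M A \<Lambda> \<psi> y" and "h' > 0"
  shows "FL1_decay_bound \<eta> K \<Lambda> \<psi> y chi A h'"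
proof -
  obtain c0A HA where A2: "assoc_M2 A c0A HA" using assoc_M2_exists[OF A] .
  obtain c0M HM where M2: "assoc_M2 M c0M HM" using assoc_M2_exists[OF M] .
  have "HA \<ge> 1" "HM \<ge> 1" using A2 M2 by (auto simp: assoc_M2_def)
  obtain C\<eta> \<tau> where "\<tau> > 0" and \<eta>_bound: "\<And>x z. \<eta> (x + z) \<le> C\<eta> * \<eta> x * exp (assoc_fn M (\<tau> * norm z))"
    using \<eta> unfolding weight_class_def by (metis (full_types))
  have \<eta>_pos: "\<And>z. 0 \<le> \<eta> z" using \<eta> by (simp add: weight_class_def less_imp_le)
  define h where "h = 8 * HA * h' + real CARD('n) * HM * \<tau>" \<comment> \<open>Beurling: the bounds hold for every \<open>h\<close>\<close>
  have "h > 0" using \<open>h' > 0\<close> \<open>\<tau> > 0\<close> \<open>HA \<ge> 1\<close> \<open>HM \<ge> 1\<close> by (simp add: h_def add_pos_pos)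
  obtain Bchi where Bchi: "S_bounded M A h 0 Bchi chi"
    using in_S_S_bounded[OF chi] \<open>h > 0\<close> by auto
  obtain Bpsi where Bpsi: "\<forall>l\<in>\<Lambda>. S_bounded M A h (y l) Bpsi (\<psi> l)"
    using UCPU_S_bounded[OF \<Psi>] \<open>h > 0\<close> by auto
  have "FL1_decay_bound \<eta> K \<Lambda> \<psi> y chi A (h / (8 * HA))"
  proof (rule FL1_decay_bound_of_S_bounded[OF M A \<open>h > 0\<close> compact_imp_bounded[OF \<open>compact K\<close>] A2 M2 \<eta>_pos
        _ \<open>\<tau> > 0\<close> _ in_S_imp_smooth_fn[OF chi] Bchi UCPU_imp_smooth_fn[OF \<Psi>]])
    show "\<eta> z \<le> C\<eta> * \<eta> 0 * exp (assoc_fn M (\<tau> * norm z))" for z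
      using \<eta>_bound[of 0 z] by simp
    show "real CARD('n) * HM * \<tau> \<le> h"
      using \<open>h' > 0\<close> \<open>HA \<ge> 1\<close> by (simp add: h_def)
  qed (use Bpsi in auto)
  moreover have "h' \<le> h / (8 * HA)"
  proof -
    have "h / (8 * HA) = h' + real CARD('n) * HM * \<tau> / (8 * HA)"
      using \<open>HA \<ge> 1\<close> by (simp add: h_def add_divide_distrib)
    then show ?thesis using \<open>HA \<ge> 1\<close> \<open>\<tau> > 0\<close> \<open>HM \<ge> 1\<close> by simp
  qed
  ultimately show ?thesis
    using \<open>h' > 0\<close> by (intro FL1_decay_bound_mono[OF A, of h' "h / (8 * HA)"]) auto
qed

lemma FL1_decay_bound_Roumieu:
  fixes \<psi> :: "'l \<Rightarrow> real^'n::finite \<Rightarrow> complex" and \<eta> :: "real^'n \<Rightarrow> real"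
  assumes M: "weight_seq M" and A: "weight_seq A" and \<eta>: "weight_class False M \<eta>" and "compact K"
    and chi: "in_S False M A chi" and \<Psi>: "UCPU False M A \<Lambda> \<psi> y"
  shows "\<exists>h'>0. FL1_decay_bound \<eta> K \<Lambda> \<psi> y chi A h'"
proof -
  obtain c0A HA where A2: "assoc_M2 A c0A HA" using assoc_M2_exists[OF A] .
  obtain c0M HM where M2: "assoc_M2 M c0M HM" using assoc_M2_exists[OF M] .
  have "HA \<ge> 1" "HM \<ge> 1" using A2 M2 by (auto simp: assoc_M2_def)
  obtain hchi Bchi where "hchi > 0" and Bchi: "S_bounded M A hchi 0 Bchi chi"
    using in_S_S_bounded[OF chi] by auto
  obtain hpsi Bpsi where "hpsi > 0" and Bpsi: "\<forall>l\<in>\<Lambda>. S_bounded M A hpsi (y l) Bpsi (\<psi> l)"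
    using UCPU_S_bounded[OF \<Psi>] by auto
  define h where "h = min hchi hpsi"
  have "h > 0" using \<open>hchi > 0\<close> \<open>hpsi > 0\<close> by (simp add: h_def)
  define \<tau> where "\<tau> = h / (real CARD('n) * HM)" \<comment> \<open>Roumieu: the weight bound holds for every \<open>\<tau>\<close>\<close>
  have "\<tau> > 0" using \<open>h > 0\<close> \<open>HM \<ge> 1\<close> by (simp add: \<tau>_def)
  obtain C\<eta> where \<eta>_bound: "\<And>x z. \<eta> (x + z) \<le> C\<eta> * \<eta> x * exp (assoc_fn M (\<tau> * norm z))"
    using \<eta> \<open>\<tau> > 0\<close> unfolding weight_class_def by fastforce
  have \<eta>_pos: "\<And>z. 0 \<le> \<eta> z" using \<eta> by (simp add: weight_class_def less_imp_le)
  have "FL1_decay_bound \<eta> K \<Lambda> \<psi> y chi A (h / (8 * HA))"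
  proof (rule FL1_decay_bound_of_S_bounded[OF M A \<open>h > 0\<close> compact_imp_bounded[OF \<open>compact K\<close>] A2 M2 \<eta>_pos
        _ \<open>\<tau> > 0\<close> _ in_S_imp_smooth_fn[OF chi] _ UCPU_imp_smooth_fn[OF \<Psi>]])
    show "\<eta> z \<le> C\<eta> * \<eta> 0 * exp (assoc_fn M (\<tau> * norm z))" for z
      using \<eta>_bound[of 0 z] by simp
    show "real CARD('n) * HM * \<tau> \<le> h" using \<open>HM \<ge> 1\<close> by (simp add: \<tau>_def)
    show "S_bounded M A h 0 Bchi chi"
      using \<open>h > 0\<close> by (intro S_bounded_mono[OF M A _ _ Bchi]) (auto simp: h_def)
    show "S_bounded M A h (y l) Bpsi (\<psi> l)" if "l \<in> \<Lambda>" for l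
      using \<open>h > 0\<close> Bpsi that by (intro S_bounded_mono[OF M A, of h hpsi]) (auto simp: h_def)
  qed
  moreover have "h / (8 * HA) > 0" using \<open>h > 0\<close> \<open>HA \<ge> 1\<close> by simp
  ultimately show ?thesis by blast
qed

theorem lemma3p7:
  fixes beurling :: bool
    and M A :: "nat \<Rightarrow> real"
    and \<eta> :: "real^'n::finite \<Rightarrow> real"
    and K :: "(real^'n) set"
    and chi :: "real^'n \<Rightarrow> complex"
    and \<Lambda> :: "'l set"
    and \<psi> :: "'l \<Rightarrow> real^'n \<Rightarrow> complex"
    and y :: "'l \<Rightarrow> real^'n"
  assumes "weight_seq M" and "weight_seq A" and "seq_M2star A"
    and "weight_class beurling M \<eta>"
    and "compact K"
    and "in_S beurling M A chi"
    and "UCPU beurling M A \<Lambda> \<psi> y"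
  shows "(if beurling then (\<forall>h'>0. \<exists>C'\<ge>1. \<forall>l\<in>\<Lambda>. \<forall>m\<in>\<Lambda>.
            (SUP x\<in>(+) (y m) ` K. FL1_norm \<eta> (\<lambda>\<xi>. \<psi> l \<xi> * transl x chi \<xi>))
              \<le> ennreal (C' * exp (- assoc_fn A (h' * norm (y l - y m)))))
         else (\<exists>h'>0. \<exists>C'\<ge>1. \<forall>l\<in>\<Lambda>. \<forall>m\<in>\<Lambda>.
            (SUP x\<in>(+) (y m) ` K. FL1_norm \<eta> (\<lambda>\<xi>. \<psi> l \<xi> * transl x chi \<xi>))
              \<le> ennreal (C' * exp (- assoc_fn A (h' * norm (y l - y m))))))"
proof (cases beurling)
  case True
  have "FL1_decay_bound \<eta> K \<Lambda> \<psi> y chi A h'" if "h' > 0" for h'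
    using FL1_decay_bound_Beurling[OF assms(1,2) _ assms(5) _ _ that] assms(4,6,7) True by simp
  with True show ?thesis unfolding FL1_decay_bound_def by simp
next
  case False
  have "\<exists>h'>0. FL1_decay_bound \<eta> K \<Lambda> \<psi> y chi A h'"
    using FL1_decay_bound_Roumieu[OF assms(1,2) _ assms(5)] assms(4,6,7) False by simp
  with False show ?thesis unfolding FL1_decay_bound_def by simp
qed

end
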